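(* Let $ABC$ be a triangle with circumcircle $\Omega$, let $P$ be a point with isogonal conjugate $P'$ with respect to $ABC$, and let $D$ be the intersection of $\Omega$ with the conic $(ABCPP')$ other than $A,B,C$. Let $X$ be the second intersection of line $DP$ with $\Omega$ and $Y$ the second intersection of line $DP'$ with $\Omega$. Let the circle $(PXY)$ meet line $PP'$ again at $Z$, and let $\mathcal C_1$ denote the conic $(ABCPX)$. Let $X_1, X_2$ vary on $\mathcal C_1$ such that $P, X, X_1, X_2$ are concyclic. (a) $X_1X_2 \parallel PZ$. (b) If lines $XX_1, XX_2$ meet $\Omega$ again at $X_1', X_2'$ respectively, then $P', X_1', X_2'$ are collinear.
   Context: For points $X,Y,Z$, $(XYZ)$ denotes the circle through them; for five points $V,W,X,Y,Z$, $(VWXYZ)$ denotes the conic through them. *)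

theory Defs
  imports "HOL-Analysis.Analysis"
begin

definition line :: "complex \<Rightarrow> complex \<Rightarrow> complex set" where
  "line U V = {U + of_real t * (V - U) | t. True}"

definition is_circle :: "complex set \<Rightarrow> bool" where
  "is_circle S \<longleftrightarrow> (\<exists>c r. r > 0 \<and> S = {z. cmod (z - c) = r})"

definition concyclic :: "complex set \<Rightarrow> bool" where
  "concyclic S \<longleftrightarrow> (\<exists>\<Gamma>. is_circle \<Gamma> \<and> S \<subseteq> \<Gamma>)"

definition is_conic :: "complex set \<Rightarrow> bool" where
  "is_conic S \<longleftrightarrow> (\<exists>a b c d e f :: real. (a, b, c) \<noteq> (0, 0, 0) \<and>
     S = {z. a * Re z ^ 2 + b * Re z * Im z + c * Im z ^ 2 + d * Re z + e * Im z + f = 0})"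

definition parallel_lines :: "complex set \<Rightarrow> complex set \<Rightarrow> bool" where
  "parallel_lines L M \<longleftrightarrow> L = M \<or> L \<inter> M = {}"

text \<open>Reflection of the point z in the line through A with direction u (u nonzero).\<close>
definition reflect :: "complex \<Rightarrow> complex \<Rightarrow> complex \<Rightarrow> complex" where
  "reflect A u z = A + (u / cnj u) * cnj (z - A)"

definition bisector_dir :: "complex \<Rightarrow> complex \<Rightarrow> complex \<Rightarrow> complex" where
  "bisector_dir A B C = (B - A) / of_real (cmod (B - A)) + (C - A) / of_real (cmod (C - A))"

definition isogonal_line :: "complex \<Rightarrow> complex \<Rightarrow> complex \<Rightarrow> complex \<Rightarrow> complex set" where
  "isogonal_line A B C P = line A (reflect A (bisector_dir A B C) P)"

definition isogonal_conjugate :: "complex \<Rightarrow> complex \<Rightarrow> complex \<Rightarrow> complex \<Rightarrow> complex \<Rightarrow> bool" where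
  "isogonal_conjugate A B C P P' \<longleftrightarrow>
     P' \<in> isogonal_line A B C P \<and> P' \<in> isogonal_line B C A P \<and> P' \<in> isogonal_line C A B P"

end

theory Submission
  imports Defs
begin

text \<open>
  Normalise the circumcircle to the unit circle and let s, e, \<sigma> be the elementary symmetric
  functions of the vertices a, b, c. The isogonal conjugate of p is the point p' with
  p + p' + \<sigma> cnj p cnj p' = s, and the circumconic through p and p' is the isogonal image of
  the line pp'.

  If a conic whose equation has leading coefficient \<alpha> (the coefficient of z^2) passes through
  four points Z1, ..., Z4 of a circle, then \<alpha> (Z1 - Z2) (Z3 - Z4) is real, by Vieta's formulas for
  the quartic that the conic equation becomes on the circle. Applied to (ABCPP') and the
  circumcircle this shows that PP' has the direction \<kappa> = - \<sigma> / d, i.e. z = \<kappa> cnj z along it.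
  Applied to C1 together with the circumcircle and with the circle (PXX1X2), using that the chord
  XP passes through D, it gives the same direction for X1X2, which is (a).

  For (b), the second intersection of C1 with the line from X to a point u of the circumcircle is
  an explicit rational function of w = - x u. The parallelism of X1X2 and PP' becomes a symmetric
  bilinear relation between the parameters w1, w2 of X1' and X2', and the relations of the
  configuration show that it is a nonzero multiple of p' + u1 u2 cnj p' = u1 + u2, which says that
  P' lies on the chord X1'X2'.
\<close>

section \<open>Real conics in complex notation\<close>

definition conic_poly :: "complex \<Rightarrow> real \<Rightarrow> complex \<Rightarrow> real \<Rightarrow> complex \<Rightarrow> real" where
  "conic_poly \<alpha> \<beta> \<gamma> \<delta> z = Re (\<alpha> * z\<^sup>2) + \<beta> * (cmod z)\<^sup>2 + Re (\<gamma> * z) + \<delta>"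

lemma complex_of_real_Re: "complex_of_real (Re w) = (w + cnj w) / 2"
  by (simp add: complex_add_cnj)

lemma of_real_conic_poly:
  "complex_of_real (conic_poly \<alpha> \<beta> \<gamma> \<delta> z) =
     (\<alpha> * z\<^sup>2 + cnj \<alpha> * (cnj z)\<^sup>2 + 2 * \<beta> * z * cnj z + \<gamma> * z + cnj \<gamma> * cnj z + 2 * \<delta>) / 2"
  unfolding conic_poly_def of_real_add of_real_mult complex_of_real_Re complex_norm_square
  by (simp add: field_simps)

lemma is_conic_iff_conic_poly:
  "is_conic S \<longleftrightarrow> (\<exists>\<alpha> \<beta> \<gamma> \<delta>. (\<alpha> \<noteq> 0 \<or> \<beta> \<noteq> 0) \<and> S = {z. conic_poly \<alpha> \<beta> \<gamma> \<delta> z = 0})"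
proof
  assume "is_conic S"
  then obtain a b c d e f :: real where abc: "(a, b, c) \<noteq> (0, 0, 0)" and
    S: "S = {z. a * Re z ^ 2 + b * Re z * Im z + c * Im z ^ 2 + d * Re z + e * Im z + f = 0}"
    unfolding is_conic_def by blast
  define \<alpha> where "\<alpha> = Complex ((a - c) / 2) (- b / 2)"
  have eq: "conic_poly \<alpha> ((a + c) / 2) (Complex d (- e)) f z =
      a * Re z ^ 2 + b * Re z * Im z + c * Im z ^ 2 + d * Re z + e * Im z + f" for z
    unfolding conic_poly_def \<alpha>_def cmod_power2 by (simp add: power2_eq_square field_simps)
  have "\<alpha> \<noteq> 0 \<or> (a + c) / 2 \<noteq> 0"
    using abc unfolding \<alpha>_def complex_eq_iff by auto
  then show "\<exists>\<alpha> \<beta> \<gamma> \<delta>. (\<alpha> \<noteq> 0 \<or> \<beta> \<noteq> 0) \<and> S = {z. conic_poly \<alpha> \<beta> \<gamma> \<delta> z = 0}"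
    using eq S by (intro exI[of _ \<alpha>] exI[of _ "(a + c) / 2"] exI[of _ "Complex d (- e)"] exI[of _ f]) auto
next
  assume "\<exists>\<alpha> \<beta> \<gamma> \<delta>. (\<alpha> \<noteq> 0 \<or> \<beta> \<noteq> 0) \<and> S = {z. conic_poly \<alpha> \<beta> \<gamma> \<delta> z = 0}"
  then obtain \<alpha> \<beta> \<gamma> \<delta> where ab: "\<alpha> \<noteq> 0 \<or> \<beta> \<noteq> 0" and S: "S = {z. conic_poly \<alpha> \<beta> \<gamma> \<delta> z = 0}"
    by blast
  have eq: "conic_poly \<alpha> \<beta> \<gamma> \<delta> z = (Re \<alpha> + \<beta>) * Re z ^ 2 + (- 2 * Im \<alpha>) * Re z * Im z
      + (\<beta> - Re \<alpha>) * Im z ^ 2 + Re \<gamma> * Re z + (- Im \<gamma>) * Im z + \<delta>" for z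
    unfolding conic_poly_def cmod_power2 by (simp add: power2_eq_square algebra_simps)
  have "(Re \<alpha> + \<beta>, - 2 * Im \<alpha>, \<beta> - Re \<alpha>) \<noteq> (0, 0, 0)"
    using ab by (auto simp: complex_eq_iff)
  then show "is_conic S"
    unfolding is_conic_def S eq by blast
qed

lemma conic_poly_affine:
  "conic_poly \<alpha> \<beta> \<gamma> \<delta> (w + m * t) =
     conic_poly (\<alpha> * m\<^sup>2) (\<beta> * (cmod m)\<^sup>2) (2 * \<alpha> * w * m + 2 * complex_of_real \<beta> * cnj w * m + \<gamma> * m)
       (conic_poly \<alpha> \<beta> \<gamma> \<delta> w) t"
proof -
  have "complex_of_real (conic_poly \<alpha> \<beta> \<gamma> \<delta> (w + m * t)) =
      complex_of_real (conic_poly (\<alpha> * m\<^sup>2) (\<beta> * (cmod m)\<^sup>2)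
        (2 * \<alpha> * w * m + 2 * complex_of_real \<beta> * cnj w * m + \<gamma> * m) (conic_poly \<alpha> \<beta> \<gamma> \<delta> w) t)"
    unfolding of_real_conic_poly of_real_mult complex_norm_square complex_cnj_add complex_cnj_mult
      complex_cnj_power complex_cnj_cnj complex_cnj_complex_of_real complex_cnj_numeral
    apply (rule sym)
    apply (simp add: field_simps)
    apply (simp only: power2_eq_square)
    apply (simp add: algebra_simps del: complex_cnj_mult)
    done
  then show ?thesis
    by (simp only: of_real_eq_iff)
qed

lemma conic_poly_on_line:
  "conic_poly \<alpha> \<beta> \<gamma> \<delta> (w + e * of_real s) = conic_poly \<alpha> \<beta> \<gamma> \<delta> w
     + s * Re ((2 * \<alpha> * w + 2 * complex_of_real \<beta> * cnj w + \<gamma>) * e)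
     + s\<^sup>2 * (Re (\<alpha> * e\<^sup>2) + \<beta> * (cmod e)\<^sup>2)"
proof -
  have "conic_poly \<alpha> \<beta> \<gamma> \<delta> (w + e * of_real s) = conic_poly (\<alpha> * e\<^sup>2) (\<beta> * (cmod e)\<^sup>2)
     (2 * \<alpha> * w * e + 2 * complex_of_real \<beta> * cnj w * e + \<gamma> * e) (conic_poly \<alpha> \<beta> \<gamma> \<delta> w) (of_real s)"
    by (rule conic_poly_affine)
  also have "\<dots> = conic_poly \<alpha> \<beta> \<gamma> \<delta> w
     + s * Re ((2 * \<alpha> * w + 2 * complex_of_real \<beta> * cnj w + \<gamma>) * e)
     + s\<^sup>2 * (Re (\<alpha> * e\<^sup>2) + \<beta> * (cmod e)\<^sup>2)"
    unfolding conic_poly_def by (simp add: algebra_simps power2_eq_square)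
  finally show ?thesis .
qed

lemma conic_poly_contains_line:
  assumes "conic_poly \<alpha> \<beta> \<gamma> \<delta> w = 0" "conic_poly \<alpha> \<beta> \<gamma> \<delta> (w + e) = 0"
    and "Re (\<alpha> * e\<^sup>2) + \<beta> * (cmod e)\<^sup>2 = 0"
  shows "conic_poly \<alpha> \<beta> \<gamma> \<delta> (w + e * of_real s) = 0"
  using conic_poly_on_line[of \<alpha> \<beta> \<gamma> \<delta> w e 1] conic_poly_on_line[of \<alpha> \<beta> \<gamma> \<delta> w e s] assms
  by simp

section \<open>Lines and collinearity\<close>

lemma mem_line_iff: "z \<in> line U V \<longleftrightarrow> (\<exists>t::real. z = U + t * (V - U))"
  unfolding line_def by auto

lemma start_mem_line: "U \<in> line U V"
  unfolding mem_line_iff by (rule exI[of _ 0]) simp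

lemma end_mem_line: "V \<in> line U V"
  unfolding mem_line_iff by (rule exI[of _ 1]) simp

lemma mem_line_iff_Im:
  assumes "U \<noteq> V"
  shows "z \<in> line U V \<longleftrightarrow> Im ((z - U) * cnj (V - U)) = 0"
proof
  assume "z \<in> line U V"
  then obtain t :: real where "z = U + t * (V - U)"
    by (auto simp: mem_line_iff)
  then have "(z - U) * cnj (V - U) = complex_of_real t * ((V - U) * cnj (V - U))"
    by simp
  also have "\<dots> = complex_of_real (t * (cmod (V - U))\<^sup>2)"
    unfolding of_real_mult complex_norm_square ..
  finally show "Im ((z - U) * cnj (V - U)) = 0"
    by (metis Im_complex_of_real)
next
  assume "Im ((z - U) * cnj (V - U)) = 0"
  then have r: "(z - U) * cnj (V - U) = complex_of_real (Re ((z - U) * cnj (V - U)))"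
    by (simp add: complex_eq_iff)
  have n: "(V - U) * cnj (V - U) \<noteq> 0"
    using assms by simp
  have solve: "w = r / (e * ce) * e" if "w * ce = r" "e * ce \<noteq> 0" for w e ce r :: complex
    using that by (auto simp: field_simps)
  have "z - U = complex_of_real (Re ((z - U) * cnj (V - U)) / (cmod (V - U))\<^sup>2) * (V - U)"
    using solve[OF r n] unfolding of_real_divide complex_norm_square .
  then show "z \<in> line U V"
    unfolding mem_line_iff by (metis add_diff_cancel_left' diff_add_cancel)
qed

lemma collinear_iff_Im: "collinear {U, V, W} \<longleftrightarrow> Im ((V - U) * cnj (W - U)) = 0"
proof -
  have "collinear {U, V, W} = collinear {V, U, W}"
    by (simp add: insert_commute)
  also have "\<dots> = collinear {0, V - U, W - U}"
    by (subst collinear_3) auto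
  also have "\<dots> = ((W - U) / (V - U) \<in> \<real>)"
    by (rule collinear_iff_Reals)
  also have "\<dots> = (Im ((V - U) * cnj (W - U)) = 0)"
  proof (cases "V = U")
    case False
    have "(W - U) / (V - U) = ((W - U) * cnj (V - U)) / ((V - U) * cnj (V - U))"
      using False by simp
    also have "\<dots> = cnj ((V - U) * cnj (W - U)) / complex_of_real ((cmod (V - U))\<^sup>2)"
      unfolding complex_norm_square by simp
    finally have "Im ((W - U) / (V - U)) = - Im ((V - U) * cnj (W - U)) / (cmod (V - U))\<^sup>2"
      by (simp add: Im_divide_of_real algebra_simps)
    then show ?thesis
      using False by (simp add: complex_is_Real_iff) argo
  qed simp
  finally show ?thesis .
qed

lemma collinear_on_line:
  fixes w e :: complex
  assumes "z1 = w + e * of_real s1" "z2 = w + e * of_real s2" "z3 = w + e * of_real s3"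
  shows "collinear {z1, z2, z3}"
proof -
  have "(z2 - z1) * cnj (z3 - z1) = complex_of_real ((s2 - s1) * (s3 - s1) * (cmod e)\<^sup>2)"
    unfolding assms of_real_mult complex_norm_square by (simp add: algebra_simps)
  then show ?thesis
    unfolding collinear_iff_Im by (metis Im_complex_of_real)
qed

lemma not_collinear_if_not_mem_line:
  assumes "U \<noteq> V" "Q \<notin> line U V"
  shows "\<not> collinear {U, V, Q}"
proof
  assume "collinear {U, V, Q}"
  moreover have "(Q - U) * cnj (V - U) = cnj ((V - U) * cnj (Q - U))"
    by simp
  ultimately have "Im ((Q - U) * cnj (V - U)) = 0"
    unfolding collinear_iff_Im by (metis cnj.sel(2) neg_equal_0_iff_equal)
  then show False
    using assms by (simp add: mem_line_iff_Im)
qed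

lemma collinear_affine_iff:
  fixes U V W c m :: complex
  assumes "m \<noteq> 0"
  shows "collinear {(U - c) / m, (V - c) / m, (W - c) / m} \<longleftrightarrow> collinear {U, V, W}"
proof -
  have "((V - c) / m - (U - c) / m) * cnj ((W - c) / m - (U - c) / m)
      = ((V - U) * cnj (W - U)) / (m * cnj m)"
    using assms by (simp add: field_simps)
  also have "\<dots> = ((V - U) * cnj (W - U)) / complex_of_real ((cmod m)\<^sup>2)"
    by (simp only: complex_norm_square)
  finally have "((V - c) / m - (U - c) / m) * cnj ((W - c) / m - (U - c) / m)
      = ((V - U) * cnj (W - U)) / complex_of_real ((cmod m)\<^sup>2)" .
  then have "Im (((V - c) / m - (U - c) / m) * cnj ((W - c) / m - (U - c) / m))
      = Im ((V - U) * cnj (W - U)) / (cmod m)\<^sup>2"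
    by (simp add: Im_divide_of_real)
  then show ?thesis
    unfolding collinear_iff_Im using assms by simp
qed

lemma collinear_if_mem_line: "z \<in> line U V \<Longrightarrow> collinear {U, V, z}"
proof -
  assume "z \<in> line U V"
  then obtain t :: real where "z = U + (V - U) * of_real t"
    unfolding mem_line_iff by (auto simp: mult.commute)
  moreover have "U = U + (V - U) * of_real 0" "V = U + (V - U) * of_real 1"
    by simp_all
  ultimately show ?thesis
    by (intro collinear_on_line) (assumption+)
qed

lemma Im_mult_cnj_eq_0_if_same_direction:
  assumes "w = \<kappa> * cnj w" "z = \<kappa> * cnj z" "\<kappa> \<noteq> 0"
  shows "Im (w * cnj z) = 0"
proof -
  have "cnj w = w / \<kappa>"
    using assms(1,3) by (simp add: field_simps)
  then have "cnj (w * cnj z) = (w / \<kappa>) * (\<kappa> * cnj z)"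
    using assms(2) by simp
  also have "\<dots> = w * cnj z"
    using assms(3) by simp
  finally show ?thesis
    by (metis Reals_cnj_iff complex_is_Real_iff)
qed

lemma parallel_lines_if_Im:
  assumes "U \<noteq> V" "U' \<noteq> V'" and parallel: "Im ((V - U) * cnj (V' - U')) = 0"
  shows "parallel_lines (line U V) (line U' V')"
  unfolding parallel_lines_def
proof (cases "line U V \<inter> line U' V' = {}")
  case False
  then obtain Y where Y: "Y \<in> line U V" "Y \<in> line U' V'"
    by blast
  define e e' where "e = V - U" and "e' = V' - U'"
  have "e \<noteq> 0" "e' \<noteq> 0"
    using assms(1,2) unfolding e_def e'_def by auto
  define \<rho> where "\<rho> = Re (e * cnj e')"
  have real: "e * cnj e' = of_real \<rho>"
    using parallel unfolding \<rho>_def e_def e'_def by (simp add: complex_eq_iff)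
  have "cnj e * e' = of_real \<rho>"
    using arg_cong[OF real, of cnj] by simp
  define r where "r = \<rho> / (cmod e')\<^sup>2"
  have "cnj e = (cnj e * e') * cnj e' / (e' * cnj e')"
    using \<open>e' \<noteq> 0\<close> by simp
  also have "\<dots> = of_real \<rho> * cnj e' / of_real ((cmod e')\<^sup>2)"
    unfolding \<open>cnj e * e' = of_real \<rho>\<close> complex_norm_square ..
  also have "\<dots> = of_real r * cnj e'"
    unfolding r_def of_real_divide by simp
  finally have ratio: "cnj e = of_real r * cnj e'" .
  then have "r \<noteq> 0"
    using \<open>e \<noteq> 0\<close> by auto
  moreover have "Im (w * cnj e) = r * Im (w * cnj e')" for w
    unfolding ratio by (simp add: algebra_simps)
  ultimately have same_Im: "Im (w * cnj e) = 0 \<longleftrightarrow> Im (w * cnj e') = 0" for w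
    by simp
  have shift: "Im ((z - U) * c) = Im ((z - Y) * c)" if "Im ((Y - U) * c) = 0" for z U c
    using that by (simp add: algebra_simps)
  have "Im ((Y - U) * cnj e) = 0" "Im ((Y - U') * cnj e') = 0"
    using Y mem_line_iff_Im[OF assms(1)] mem_line_iff_Im[OF assms(2)] unfolding e_def e'_def by simp_all
  then have "z \<in> line U V \<longleftrightarrow> z \<in> line U' V'" for z
    unfolding mem_line_iff_Im[OF assms(1)] mem_line_iff_Im[OF assms(2)] e_def[symmetric] e'_def[symmetric]
    using shift same_Im by metis
  then show "line U V = line U' V' \<or> line U V \<inter> line U' V' = {}"
    by blast
qed simp

section \<open>Circles\<close>

lemma cnj_unit:
  assumes "cmod t = 1"
  shows "cnj t = 1 / t"
proof -
  have "t * cnj t = 1"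
    using complex_norm_square[of t] assms by simp
  then show ?thesis
    by (metis mult_zero_left nonzero_eq_divide_eq zero_neq_one mult.commute)
qed

lemma unit_chord: "cmod u = 1 \<Longrightarrow> cmod v = 1 \<Longrightarrow> u - v = - (u * v) * cnj (u - v)"
  using cnj_unit[of u] cnj_unit[of v] by (auto simp: field_simps)

lemma circle_chord:
  assumes "cmod (U - c) = r" "cmod (V - c) = r" "r > 0"
  shows "U - V = - ((U - c) / r * ((V - c) / r)) * cnj (U - V)"
proof -
  define u v where "u = (U - c) / r" and "v = (V - c) / r"
  have unit: "cmod u = 1" "cmod v = 1"
    using assms unfolding u_def v_def by (simp_all add: norm_divide)
  have diff: "U - V = of_real r * (u - v)"
    using assms(3) unfolding u_def v_def by (simp add: field_simps)
  then have cnj_diff: "cnj (U - V) = of_real r * cnj (u - v)"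
    by simp
  have "U - V = of_real r * (- (u * v) * cnj (u - v))"
    unfolding diff using unit_chord[OF unit] by (rule arg_cong[where f = "\<lambda>w. of_real r * w"])
  also have "\<dots> = - (u * v) * cnj (U - V)"
    unfolding cnj_diff by (simp only: mult_ac)
  finally show ?thesis
    unfolding u_def v_def .
qed

lemma unit_chord_collinear_iff:
  assumes unit: "cmod u = 1" "cmod v = 1" and "u \<noteq> v"
  shows "collinear {z, u, v} \<longleftrightarrow> z + u * v * cnj z = u + v"
proof -
  have nz: "u \<noteq> 0" "v \<noteq> 0"
    using unit by auto
  have "collinear {z, u, v} \<longleftrightarrow> collinear {u, v, z}"
    by (simp add: insert_commute)
  also have "\<dots> \<longleftrightarrow> cnj ((v - u) * cnj (z - u)) = (v - u) * cnj (z - u)"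
    unfolding collinear_iff_Im by (simp only: Reals_cnj_iff[symmetric] complex_is_Real_iff)
  also have "cnj ((v - u) * cnj (z - u)) - (v - u) * cnj (z - u)
      = (u - v) * (z + u * v * cnj z - u - v) / (u * v)"
    using nz by (simp add: cnj_unit[OF unit(1)] cnj_unit[OF unit(2)] field_simps)
  then have "cnj ((v - u) * cnj (z - u)) = (v - u) * cnj (z - u)
      \<longleftrightarrow> (u - v) * (z + u * v * cnj z - u - v) / (u * v) = 0"
    by (metis eq_iff_diff_eq_0)
  also have "\<dots> \<longleftrightarrow> z + u * v * cnj z - (u + v) = 0"
    using nz assms(3) by (simp add: diff_diff_eq)
  also have "\<dots> \<longleftrightarrow> z + u * v * cnj z = u + v"
    by (rule eq_iff_diff_eq_0[symmetric])
  finally show ?thesis .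
qed

lemma concyclic_not_collinear:
  assumes "cmod (U - c) = r" "cmod (V - c) = r" "cmod (W - c) = r" "U \<noteq> V" "U \<noteq> W" "V \<noteq> W"
  shows "\<not> collinear {U, V, W}"
proof
  assume col: "collinear {U, V, W}"
  have "r > 0"
    using assms(1,2,4) norm_ge_zero[of "U - c"] by force
  then have r: "complex_of_real r \<noteq> 0"
    by simp
  define u v w where "u = (U - c) / r" and "v = (V - c) / r" and "w = (W - c) / r"
  have unit: "cmod u = 1" "cmod v = 1" "cmod w = 1"
    using assms \<open>r > 0\<close> unfolding u_def v_def w_def by (simp_all add: norm_divide)
  have distinct: "u \<noteq> v" "u \<noteq> w" "v \<noteq> w"
    using assms(4-6) r unfolding u_def v_def w_def by (auto simp: divide_cancel_right)
  have "u + v * w * cnj u = v + w"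
    using col unit_chord_collinear_iff[OF unit(2,3) distinct(3)] collinear_affine_iff[OF r]
    unfolding u_def v_def w_def by blast
  then have "(u - v) * (u - w) / u = 0"
    using unit(1) by (auto simp: cnj_unit field_simps)
  then show False
    using distinct unit(1) by auto
qed

lemma cubic_coeffs_eq_0:
  fixes d0 d1 d2 d3 t1 t2 t3 t4 :: complex
  assumes d: "t1 \<noteq> t2" "t1 \<noteq> t3" "t1 \<noteq> t4" "t2 \<noteq> t3" "t2 \<noteq> t4" "t3 \<noteq> t4"
    and g1: "d3*t1^3 + d2*t1^2 + d1*t1 + d0 = 0"
    and g2: "d3*t2^3 + d2*t2^2 + d1*t2 + d0 = 0"
    and g3: "d3*t3^3 + d2*t3^2 + d1*t3 + d0 = 0"
    and g4: "d3*t4^3 + d2*t4^2 + d1*t4 + d0 = 0"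
  shows "d3 = 0 \<and> d2 = 0 \<and> d1 = 0 \<and> d0 = 0"
proof -
  have i: "(d3*x^3 + d2*x^2 + d1*x + d0) - (d3*y^3 + d2*y^2 + d1*y + d0)
      = (x - y) * (d3*(x^2+x*y+y^2) + d2*(x+y) + d1)" for x y :: complex
    by (simp add: algebra_simps power2_eq_square power3_eq_cube)
  have e12: "d3*(t1^2+t1*t2+t2^2) + d2*(t1+t2) + d1 = 0" using i[of t1 t2] g1 g2 d by simp
  have e13: "d3*(t1^2+t1*t3+t3^2) + d2*(t1+t3) + d1 = 0" using i[of t1 t3] g1 g3 d by simp
  have e14: "d3*(t1^2+t1*t4+t4^2) + d2*(t1+t4) + d1 = 0" using i[of t1 t4] g1 g4 d by simp
  have j: "(d3*(x^2+x*y+y^2) + d2*(x+y) + d1) - (d3*(x^2+x*z+z^2) + d2*(x+z) + d1)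
     = (y - z) * (d3*(x+y+z) + d2)" for x y z :: complex
    by (simp add: algebra_simps power2_eq_square)
  have e123: "d3*(t1+t2+t3) + d2 = 0" using j[of t1 t2 t3] e12 e13 d by simp
  have e124: "d3*(t1+t2+t4) + d2 = 0" using j[of t1 t2 t4] e12 e14 d by simp
  have "(d3*(t1+t2+t3) + d2) - (d3*(t1+t2+t4) + d2) = (t3 - t4) * d3"
    by (simp add: algebra_simps)
  then have "d3 = 0" using e123 e124 d by simp
  moreover from this have "d2 = 0" using e123 by simp
  moreover from calculation have "d1 = 0" using e12 by simp
  moreover from calculation have "d0 = 0" using g1 by simp
  ultimately show ?thesis by simp
qed

text \<open>On the unit circle cnj t = 1 / t, so the conic equation becomes a quartic in t with roots
  t1, t2, t3, t4.\<close>

lemma conic_poly_unit_circle_vieta: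
  assumes unit: "cmod t1 = 1" "cmod t2 = 1" "cmod t3 = 1" "cmod t4 = 1"
    and d: "t1 \<noteq> t2" "t1 \<noteq> t3" "t1 \<noteq> t4" "t2 \<noteq> t3" "t2 \<noteq> t4" "t3 \<noteq> t4"
    and on_conic: "conic_poly \<alpha> \<beta> \<gamma> \<delta> t1 = 0" "conic_poly \<alpha> \<beta> \<gamma> \<delta> t2 = 0"
      "conic_poly \<alpha> \<beta> \<gamma> \<delta> t3 = 0" "conic_poly \<alpha> \<beta> \<gamma> \<delta> t4 = 0"
  shows "cnj \<alpha> = \<alpha> * (t1*t2*t3*t4)" "\<gamma> = - \<alpha> * (t1+t2+t3+t4)"
    "2 * complex_of_real (\<beta> + \<delta>) = \<alpha> * (t1*t2+t1*t3+t1*t4+t2*t3+t2*t4+t3*t4)"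
    "cnj \<gamma> = - \<alpha> * (t1*t2*t3+t1*t2*t4+t1*t3*t4+t2*t3*t4)"
proof -
  have quartic: "\<alpha>*t^4 + \<gamma>*t^3 + 2*complex_of_real (\<beta>+\<delta>)*t^2 + cnj \<gamma>*t + cnj \<alpha> = 0"
    if ht: "cmod t = 1" "conic_poly \<alpha> \<beta> \<gamma> \<delta> t = 0" for t
  proof -
    have ct: "cnj t = 1 / t" using cnj_unit[OF ht(1)] .
    have t0: "t \<noteq> 0" using ht(1) by auto
    have "0 = (\<alpha> * t^2 + cnj \<alpha> * (1/t)^2 + 2*complex_of_real \<beta>*t*(1/t) + \<gamma>*t + cnj \<gamma>*(1/t)
        + 2*complex_of_real \<delta>)/2"
      using ht(2) of_real_conic_poly[of \<alpha> \<beta> \<gamma> \<delta> t] unfolding ct by simp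
    then have "0 = (\<alpha> * t^2 + cnj \<alpha> * (1/t)^2 + 2*complex_of_real \<beta>*t*(1/t) + \<gamma>*t + cnj \<gamma>*(1/t)
        + 2*complex_of_real \<delta>)/2 * (2 * t^2)"
      by simp
    also have "\<dots> = \<alpha>*t^4 + \<gamma>*t^3 + 2*complex_of_real (\<beta>+\<delta>)*t^2 + cnj \<gamma>*t + cnj \<alpha>"
      using t0 by (simp add: field_simps power2_eq_square power3_eq_cube power4_eq_xxxx
          del: complex_cnj_mult)
    finally show ?thesis by simp
  qed
  define d3 where "d3 = \<gamma> + \<alpha> * (t1+t2+t3+t4)"
  define d2 where "d2 = 2 * complex_of_real (\<beta> + \<delta>) - \<alpha> * (t1*t2+t1*t3+t1*t4+t2*t3+t2*t4+t3*t4)"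
  define d1 where "d1 = cnj \<gamma> + \<alpha> * (t1*t2*t3+t1*t2*t4+t1*t3*t4+t2*t3*t4)"
  define d0 where "d0 = cnj \<alpha> - \<alpha> * (t1*t2*t3*t4)"
  have remainder: "\<alpha>*t^4 + \<gamma>*t^3 + 2*complex_of_real (\<beta>+\<delta>)*t^2 + cnj \<gamma>*t + cnj \<alpha>
     = \<alpha> * ((t-t1)*(t-t2)*(t-t3)*(t-t4)) + (d3*t^3 + d2*t^2 + d1*t + d0)" for t
    unfolding d3_def d2_def d1_def d0_def
    by (simp add: algebra_simps power2_eq_square power3_eq_cube power4_eq_xxxx del: complex_cnj_mult)
  have root: "d3*t^3 + d2*t^2 + d1*t + d0 = 0"
    if "t \<in> {t1,t2,t3,t4}" "cmod t = 1" "conic_poly \<alpha> \<beta> \<gamma> \<delta> t = 0" for t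
  proof -
    have p0: "(t-t1)*(t-t2)*(t-t3)*(t-t4) = 0" using that(1) by auto
    have "0 = \<alpha> * ((t-t1)*(t-t2)*(t-t3)*(t-t4)) + (d3*t^3 + d2*t^2 + d1*t + d0)"
      using remainder[of t] quartic[OF that(2,3)] by simp
    then show ?thesis
      unfolding p0 by simp
  qed
  have "d3 = 0 \<and> d2 = 0 \<and> d1 = 0 \<and> d0 = 0"
    by (rule cubic_coeffs_eq_0[OF d root[OF _ unit(1) on_conic(1)] root[OF _ unit(2) on_conic(2)]
          root[OF _ unit(3) on_conic(3)] root[OF _ unit(4) on_conic(4)]]) auto
  then show "cnj \<alpha> = \<alpha> * (t1*t2*t3*t4)" "\<gamma> = - \<alpha> * (t1+t2+t3+t4)"
    "2 * complex_of_real (\<beta> + \<delta>) = \<alpha> * (t1*t2+t1*t3+t1*t4+t2*t3+t2*t4+t3*t4)"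
    "cnj \<gamma> = - \<alpha> * (t1*t2*t3+t1*t2*t4+t1*t3*t4+t2*t3*t4)"
    unfolding d3_def d2_def d1_def d0_def
    by (simp_all add: algebra_simps eq_neg_iff_add_eq_0 del: complex_cnj_mult)
qed

text \<open>For a conic through four points of a circle, the chords Z1Z2 and Z3Z4 are equally inclined
  to the axes of the conic.\<close>

lemma conic_poly_concyclic_chords:
  assumes circle: "cmod (Z1 - c) = r" "cmod (Z2 - c) = r" "cmod (Z3 - c) = r" "cmod (Z4 - c) = r"
    and distinct: "Z1 \<noteq> Z2" "Z1 \<noteq> Z3" "Z1 \<noteq> Z4" "Z2 \<noteq> Z3" "Z2 \<noteq> Z4" "Z3 \<noteq> Z4"
    and on_conic: "conic_poly \<alpha> \<beta> \<gamma> \<delta> Z1 = 0" "conic_poly \<alpha> \<beta> \<gamma> \<delta> Z2 = 0"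
      "conic_poly \<alpha> \<beta> \<gamma> \<delta> Z3 = 0" "conic_poly \<alpha> \<beta> \<gamma> \<delta> Z4 = 0"
  shows "\<alpha> * (Z1 - Z2) * (Z3 - Z4) \<in> \<real>"
proof -
  have "r > 0"
    using circle(1,2) distinct(1) norm_ge_zero[of "Z1 - c"] by force
  then have r: "r \<noteq> 0"
    by simp
  define t where "t Z = (Z - c) / of_real r" for Z
  have Z_eq: "Z = c + of_real r * t Z" for Z
    unfolding t_def using r by simp
  have t_eq_iff: "t Z = t Z' \<longleftrightarrow> Z = Z'" for Z Z'
    unfolding t_def using r by (auto simp: divide_cancel_right)
  have unit: "cmod (t Z1) = 1" "cmod (t Z2) = 1" "cmod (t Z3) = 1" "cmod (t Z4) = 1"
    using circle \<open>r > 0\<close> unfolding t_def by (simp_all add: norm_divide)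
  define \<alpha>' where "\<alpha>' = \<alpha> * (of_real r)\<^sup>2"
  define \<gamma>' where "\<gamma>' = 2 * \<alpha> * c * r + 2 * complex_of_real \<beta> * cnj c * r + \<gamma> * r"
  define \<delta>' where "\<delta>' = conic_poly \<alpha> \<beta> \<gamma> \<delta> c"
  have transformed: "conic_poly \<alpha> \<beta> \<gamma> \<delta> Z = conic_poly \<alpha>' (\<beta> * (cmod (of_real r))\<^sup>2) \<gamma>' \<delta>' (t Z)"
    for Z
    using conic_poly_affine[of \<alpha> \<beta> \<gamma> \<delta> c "of_real r" "t Z"]
    unfolding \<alpha>'_def \<gamma>'_def \<delta>'_def by (simp flip: Z_eq)
  have "cnj \<alpha>' = \<alpha>' * (t Z1 * t Z2 * t Z3 * t Z4)"
    using conic_poly_unit_circle_vieta(1)[OF unit] distinct on_conic by (simp add: t_eq_iff transformed)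
  then have vieta: "cnj \<alpha> = \<alpha> * (t Z1 * t Z2 * t Z3 * t Z4)"
    using r unfolding \<alpha>'_def by (simp add: mult_ac)
  have "(Z1 - Z2) * (Z3 - Z4) = (- (t Z1 * t Z2) * cnj (Z1 - Z2)) * (- (t Z3 * t Z4) * cnj (Z3 - Z4))"
    using circle_chord[OF circle(1,2) \<open>r > 0\<close>] circle_chord[OF circle(3,4) \<open>r > 0\<close>] unfolding t_def by metis
  also have "\<dots> = (t Z1 * t Z2 * t Z3 * t Z4) * cnj ((Z1 - Z2) * (Z3 - Z4))"
    by (simp add: mult_ac)
  finally have chords: "(Z1 - Z2) * (Z3 - Z4) = (t Z1 * t Z2 * t Z3 * t Z4) * cnj ((Z1 - Z2) * (Z3 - Z4))" .
  have "cnj (\<alpha> * (Z1 - Z2) * (Z3 - Z4)) = cnj \<alpha> * cnj ((Z1 - Z2) * (Z3 - Z4))"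
    by simp
  also have "\<dots> = \<alpha> * ((t Z1 * t Z2 * t Z3 * t Z4) * cnj ((Z1 - Z2) * (Z3 - Z4)))"
    unfolding vieta by (simp only: mult_ac)
  finally have "cnj (\<alpha> * (Z1 - Z2) * (Z3 - Z4)) = \<alpha> * (Z1 - Z2) * (Z3 - Z4)"
    unfolding chords[symmetric] by (simp only: mult_ac)
  then show ?thesis
    by (simp add: Reals_cnj_iff)
qed

section \<open>Degenerate conics\<close>

lemma conic_poly_vanishing_on_real_axis:
  assumes axis: "\<And>s::real. conic_poly \<alpha> \<beta> \<gamma> \<delta> (of_real s) = 0"
  shows "conic_poly \<alpha> \<beta> \<gamma> \<delta> t = - Im t * (2 * Im \<alpha> * Re t + 2 * Re \<alpha> * Im t + Im \<gamma>)"
    and "\<alpha> \<noteq> 0 \<or> \<beta> \<noteq> 0 \<Longrightarrow> Im \<alpha> \<noteq> 0 \<or> Re \<alpha> \<noteq> 0"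
proof -
  have real: "(Re \<alpha> + \<beta>) * s\<^sup>2 + Re \<gamma> * s + \<delta> = 0" for s
    using axis[of s] unfolding conic_poly_def by (simp add: algebra_simps power2_eq_square)
  have "\<delta> = 0"
    using real[of 0] by simp
  moreover have "Re \<alpha> + \<beta> + Re \<gamma> = 0" "Re \<alpha> + \<beta> - Re \<gamma> = 0"
    using real[of 1] real[of "-1"] \<open>\<delta> = 0\<close> by simp_all
  ultimately have coeffs: "\<delta> = 0" "\<beta> = - Re \<alpha>" "Re \<gamma> = 0"
    by linarith+
  show "conic_poly \<alpha> \<beta> \<gamma> \<delta> t = - Im t * (2 * Im \<alpha> * Re t + 2 * Re \<alpha> * Im t + Im \<gamma>)"
    unfolding conic_poly_def cmod_power2 coeffs(1,2) by (simp add: algebra_simps power2_eq_square coeffs(3))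
  show "Im \<alpha> \<noteq> 0 \<or> Re \<alpha> \<noteq> 0" if "\<alpha> \<noteq> 0 \<or> \<beta> \<noteq> 0"
    using that coeffs(2) by (auto simp: complex_eq_iff)
qed

lemma collinear_if_linear_equation:
  assumes "a \<noteq> 0 \<or> b \<noteq> 0" and "a * Re z1 + b * Im z1 + c = 0" "a * Re z2 + b * Im z2 + c = 0"
    "a * Re z3 + b * Im z3 + c = 0"
  shows "collinear {z1, z2, z3}"
proof -
  have "a * ((Im z2 - Im z1) * (Re z3 - Re z1) - (Re z2 - Re z1) * (Im z3 - Im z1)) =
      (Im z2 - Im z1) * ((a * Re z3 + b * Im z3 + c) - (a * Re z1 + b * Im z1 + c))
      - ((a * Re z2 + b * Im z2 + c) - (a * Re z1 + b * Im z1 + c)) * (Im z3 - Im z1)"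
    "b * ((Im z2 - Im z1) * (Re z3 - Re z1) - (Re z2 - Re z1) * (Im z3 - Im z1)) =
      ((a * Re z2 + b * Im z2 + c) - (a * Re z1 + b * Im z1 + c)) * (Re z3 - Re z1)
      - ((a * Re z3 + b * Im z3 + c) - (a * Re z1 + b * Im z1 + c)) * (Re z2 - Re z1)"
    by (simp_all add: algebra_simps)
  then have "(Im z2 - Im z1) * (Re z3 - Re z1) - (Re z2 - Re z1) * (Im z3 - Im z1) = 0"
    using assms by auto
  then show ?thesis
    unfolding collinear_iff_Im by (simp add: algebra_simps)
qed

lemma collinear_off_line_if_conic_poly_contains_line:
  assumes nondegenerate: "\<alpha> \<noteq> 0 \<or> \<beta> \<noteq> 0" and "e \<noteq> 0"
    and line: "\<And>s::real. conic_poly \<alpha> \<beta> \<gamma> \<delta> (Y + e * of_real s) = 0"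
    and on_conic: "conic_poly \<alpha> \<beta> \<gamma> \<delta> Z1 = 0" "conic_poly \<alpha> \<beta> \<gamma> \<delta> Z2 = 0" "conic_poly \<alpha> \<beta> \<gamma> \<delta> Z3 = 0"
    and off_line: "\<And>s::real. Z1 \<noteq> Y + e * of_real s" "\<And>s::real. Z2 \<noteq> Y + e * of_real s"
      "\<And>s::real. Z3 \<noteq> Y + e * of_real s"
  shows "collinear {Z1, Z2, Z3}"
proof -
  define \<alpha>' \<beta>' \<gamma>' \<delta>' where "\<alpha>' = \<alpha> * e\<^sup>2" and "\<beta>' = \<beta> * (cmod e)\<^sup>2"
    and "\<gamma>' = 2 * \<alpha> * Y * e + 2 * complex_of_real \<beta> * cnj Y * e + \<gamma> * e" and "\<delta>' = conic_poly \<alpha> \<beta> \<gamma> \<delta> Y"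
  have transformed: "conic_poly \<alpha> \<beta> \<gamma> \<delta> (Y + e * t) = conic_poly \<alpha>' \<beta>' \<gamma>' \<delta>' t" for t
    unfolding \<alpha>'_def \<beta>'_def \<gamma>'_def \<delta>'_def by (rule conic_poly_affine)
  have axis: "conic_poly \<alpha>' \<beta>' \<gamma>' \<delta>' (of_real s) = 0" for s
    using line[of s] unfolding transformed .
  have "\<alpha>' \<noteq> 0 \<or> \<beta>' \<noteq> 0"
    using nondegenerate \<open>e \<noteq> 0\<close> unfolding \<alpha>'_def \<beta>'_def by auto
  then have nonzero: "2 * Im \<alpha>' \<noteq> 0 \<or> 2 * Re \<alpha>' \<noteq> 0"
    using conic_poly_vanishing_on_real_axis(2)[OF axis] by simp
  have linear: "2 * Im \<alpha>' * Re ((Z - Y) / e) + 2 * Re \<alpha>' * Im ((Z - Y) / e) + Im \<gamma>' = 0"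
    if "conic_poly \<alpha> \<beta> \<gamma> \<delta> Z = 0" "\<And>s::real. Z \<noteq> Y + e * of_real s" for Z
  proof -
    have Z_eq: "Z = Y + e * ((Z - Y) / e)"
      using \<open>e \<noteq> 0\<close> by simp
    have "Im ((Z - Y) / e) \<noteq> 0"
    proof
      assume "Im ((Z - Y) / e) = 0"
      then have "(Z - Y) / e = of_real (Re ((Z - Y) / e))"
        by (simp add: complex_eq_iff)
      then show False
        using that(2) Z_eq by metis
    qed
    moreover have "conic_poly \<alpha>' \<beta>' \<gamma>' \<delta>' ((Z - Y) / e) = 0"
      using that(1) transformed Z_eq by metis
    ultimately show ?thesis
      using conic_poly_vanishing_on_real_axis(1)[OF axis, of "(Z - Y) / e"] by simp
  qed
  have "collinear {(Z1 - Y) / e, (Z2 - Y) / e, (Z3 - Y) / e}"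
    using nonzero linear[OF on_conic(1) off_line(1)] linear[OF on_conic(2) off_line(2)]
      linear[OF on_conic(3) off_line(3)] by (rule collinear_if_linear_equation)
  then show ?thesis
    using collinear_affine_iff[OF \<open>e \<noteq> 0\<close>] by blast
qed

lemma is_conic_line_pair:
  assumes "U \<noteq> V" "U' \<noteq> V'"
  shows "is_conic (line U V \<union> line U' V')"
proof -
  define \<mu>1 \<mu>2 where "\<mu>1 = - \<i> * cnj (V - U)" and "\<mu>2 = - \<i> * cnj (V' - U')"
  define c1 c2 where "c1 = Re (\<i> * cnj (V - U) * U)" and "c2 = Re (\<i> * cnj (V' - U') * U')"
  have Im_linear: "Im ((z - W) * cnj v) = Re ((- \<i> * cnj v) * z) + Re (\<i> * cnj v * W)" for z W v
    by (simp add: algebra_simps)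
  have product: "(Re (\<mu>1 * z) + c1) * (Re (\<mu>2 * z) + c2) = conic_poly (\<mu>1 * \<mu>2 / 2)
      (Re (\<mu>1 * cnj \<mu>2) / 2) (complex_of_real c2 * \<mu>1 + complex_of_real c1 * \<mu>2) (c1 * c2) z" for z
    unfolding conic_poly_def cmod_power2 by (simp add: field_simps power2_eq_square)
  have "z \<in> line U V \<union> line U' V' \<longleftrightarrow> (Re (\<mu>1 * z) + c1) * (Re (\<mu>2 * z) + c2) = 0" for z
    using mem_line_iff_Im[OF assms(1), of z] mem_line_iff_Im[OF assms(2), of z]
      Im_linear[of z U "V - U"] Im_linear[of z U' "V' - U'"]
    unfolding \<mu>1_def \<mu>2_def c1_def c2_def by auto
  moreover have "\<mu>1 * \<mu>2 / 2 \<noteq> 0"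
    using assms unfolding \<mu>1_def \<mu>2_def by simp
  ultimately show ?thesis
    unfolding is_conic_iff_conic_poly product by blast
qed

lemma conic_through_four_points_not_unique:
  assumes triangle: "\<not> collinear {U, V, W}" and Q: "Q \<notin> line U V" "Q \<notin> line V W" "Q \<notin> line W U"
  shows "\<not> (\<forall>K'. is_conic K' \<and> {U, V, W, Q} \<subseteq> K' \<longrightarrow> K' = K)"
proof
  assume unique: "\<forall>K'. is_conic K' \<and> {U, V, W, Q} \<subseteq> K' \<longrightarrow> K' = K"
  have distinct: "U \<noteq> V" "U \<noteq> W" "W \<noteq> Q" "V \<noteq> Q"
    using triangle Q start_mem_line end_mem_line by (auto simp: collinear_iff_Im)
  have line_pair: "line U1 V1 \<union> line U2 V2 = K"
    if "U1 \<noteq> V1" "U2 \<noteq> V2" "{U, V, W, Q} \<subseteq> line U1 V1 \<union> line U2 V2" for U1 V1 U2 V2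
    using unique is_conic_line_pair[OF that(1,2)] that(3) by blast
  have "line U V \<union> line W Q = K"
    using distinct start_mem_line end_mem_line by (intro line_pair) auto
  moreover have "line U W \<union> line V Q = K"
    using distinct start_mem_line end_mem_line by (intro line_pair) auto
  moreover have "2 * V - U \<in> line U V"
    unfolding mem_line_iff by (rule exI[of _ 2]) (simp add: algebra_simps)
  ultimately have "2 * V - U \<in> line U W \<union> line V Q"
    by auto
  then show False
  proof
    assume "2 * V - U \<in> line U W"
    then obtain t :: real where "2 * V - U = U + t * (W - U)"
      unfolding mem_line_iff by blast
    then have "V \<in> line U W"
      unfolding mem_line_iff by (intro exI[of _ "t / 2"]) (simp add: field_simps)
    then have "collinear {U, W, V}"
      by (rule collinear_if_mem_line)
    then show False
      using triangle by (simp add: insert_commute)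
  next
    assume "2 * V - U \<in> line V Q"
    then obtain t :: real where t: "2 * V - U = V + t * (Q - V)"
      unfolding mem_line_iff by blast
    then have VU: "V - U = t * (Q - V)"
      by (simp add: algebra_simps)
    then have "t \<noteq> 0"
      using distinct by auto
    then have "Q = U + of_real (1 + 1 / t) * (V - U)"
      using VU by (simp add: field_simps)
    then show False
      using Q(1) unfolding mem_line_iff by blast
  qed
qed

lemma unique_conic_fifth_point_not_vertex:
  assumes "\<not> collinear {A, B, C}" "P \<notin> line A B" "P \<notin> line B C" "P \<notin> line C A"
    and "\<forall>K'. is_conic K' \<and> {A, B, C, P, X} \<subseteq> K' \<longrightarrow> K' = K"
  shows "X \<notin> {A, B, C}"
proof
  assume "X \<in> {A, B, C}"
  then have "{A, B, C, P, X} = {A, B, C, P}"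
    by auto
  then show False
    using conic_through_four_points_not_unique[OF assms(1-4), of K] assms(5) by simp
qed

text \<open>If the conic contained a line, three of the five points would lie on it or three would lie
  off it, and either triple would be collinear.\<close>

lemma conic_poly_contains_no_line:
  assumes nondegenerate: "\<alpha> \<noteq> 0 \<or> \<beta> \<noteq> 0" and "e \<noteq> 0"
    and on_conic: "conic_poly \<alpha> \<beta> \<gamma> \<delta> z1 = 0" "conic_poly \<alpha> \<beta> \<gamma> \<delta> z2 = 0" "conic_poly \<alpha> \<beta> \<gamma> \<delta> z3 = 0"
      "conic_poly \<alpha> \<beta> \<gamma> \<delta> z4 = 0" "conic_poly \<alpha> \<beta> \<gamma> \<delta> z5 = 0"
    and general_position: "\<not> collinear {z1, z2, z3}" "\<not> collinear {z1, z2, z4}" "\<not> collinear {z1, z2, z5}"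
      "\<not> collinear {z1, z3, z4}" "\<not> collinear {z1, z3, z5}" "\<not> collinear {z1, z4, z5}"
      "\<not> collinear {z2, z3, z4}" "\<not> collinear {z2, z3, z5}" "\<not> collinear {z2, z4, z5}"
      "\<not> collinear {z3, z4, z5}"
  shows "\<not> (\<forall>s::real. conic_poly \<alpha> \<beta> \<gamma> \<delta> (Y + e * of_real s) = 0)"
proof
  assume "\<forall>s::real. conic_poly \<alpha> \<beta> \<gamma> \<delta> (Y + e * of_real s) = 0"
  then have line: "\<And>s::real. conic_poly \<alpha> \<beta> \<gamma> \<delta> (Y + e * of_real s) = 0"
    by blast
  define on_line where "on_line z \<longleftrightarrow> (\<exists>s::real. z = Y + e * of_real s)" for z
  have on: "collinear {u, v, w}" if "on_line u" "on_line v" "on_line w" for u v w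
    using that unfolding on_line_def by (metis collinear_on_line)
  have off: "collinear {u, v, w}"
    if "conic_poly \<alpha> \<beta> \<gamma> \<delta> u = 0" "conic_poly \<alpha> \<beta> \<gamma> \<delta> v = 0" "conic_poly \<alpha> \<beta> \<gamma> \<delta> w = 0"
      "\<not> on_line u" "\<not> on_line v" "\<not> on_line w" for u v w
    using that unfolding on_line_def
    by (intro collinear_off_line_if_conic_poly_contains_line[OF nondegenerate \<open>e \<noteq> 0\<close> line]) auto
  show False
    using on off on_conic general_position
    by (cases "on_line z1"; cases "on_line z2"; cases "on_line z3"; cases "on_line z4"; cases "on_line z5")
      blast+
qed

section \<open>Isogonal conjugation\<close>

lemma reflect_bisector_dir:
  assumes "\<not> collinear {A, B, C}"
  shows "reflect A (bisector_dir A B C) Q - A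
    = (B - A) / cmod (B - A) * ((C - A) / cmod (C - A)) * cnj (Q - A)"
proof -
  have "B \<noteq> A" "C \<noteq> A"
    using assms by (auto simp: collinear_iff_Im)
  define e1 e2 where "e1 = (B - A) / cmod (B - A)" and "e2 = (C - A) / cmod (C - A)"
  have unit: "cmod e1 = 1" "cmod e2 = 1"
    using \<open>B \<noteq> A\<close> \<open>C \<noteq> A\<close> unfolding e1_def e2_def by (simp_all add: norm_divide)
  then have nonzero: "e1 \<noteq> 0" "e2 \<noteq> 0"
    by auto
  have "e1 + e2 \<noteq> 0"
  proof
    assume "e1 + e2 = 0"
    then have k: "C - A = of_real (- cmod (C - A) / cmod (B - A)) * (B - A)"
      using \<open>B \<noteq> A\<close> \<open>C \<noteq> A\<close> unfolding e1_def e2_def by (simp add: field_simps)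
    have "(B - A) * cnj (C - A) = of_real (- cmod (C - A) / cmod (B - A)) * ((B - A) * cnj (B - A))"
      by (subst k) simp
    also have "\<dots> = of_real (- cmod (C - A) / cmod (B - A) * (cmod (B - A))\<^sup>2)"
      by (simp only: of_real_mult complex_norm_square)
    finally have "Im ((B - A) * cnj (C - A)) = 0"
      by (metis Im_complex_of_real)
    then show False
      using assms collinear_iff_Im by blast
  qed
  then have "bisector_dir A B C / cnj (bisector_dir A B C) = e1 * e2"
    unfolding bisector_dir_def e1_def[symmetric] e2_def[symmetric] complex_cnj_add
      cnj_unit[OF unit(1)] cnj_unit[OF unit(2)]
    using nonzero by (simp add: field_simps)
  then show ?thesis
    unfolding reflect_def e1_def e2_def by simp
qed

lemma isogonal_line_Im:
  assumes "\<not> collinear {A, B, C}" and "P' \<in> isogonal_line A B C P"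
  shows "Im ((P' - A) * (P - A) * cnj (B - A) * cnj (C - A)) = 0"
proof -
  obtain t :: real where "P' = A + t * (reflect A (bisector_dir A B C) P - A)"
    using assms(2) unfolding isogonal_line_def mem_line_iff by blast
  then have P'_eq: "P' - A = t * ((B - A) / cmod (B - A) * ((C - A) / cmod (C - A)) * cnj (P - A))"
    unfolding reflect_bisector_dir[OF assms(1)] by simp
  have direction: "Z / cmod Z * cnj Z = of_real (cmod Z)" if "Z \<noteq> 0" for Z
    using that by (simp add: complex_norm_square[symmetric] power2_eq_square)
  have "B - A \<noteq> 0" "C - A \<noteq> 0"
    using assms(1) by (auto simp: collinear_iff_Im)
  have "(P' - A) * (P - A) * cnj (B - A) * cnj (C - A) = t * ((P - A) * cnj (P - A))
      * ((B - A) / cmod (B - A) * cnj (B - A)) * ((C - A) / cmod (C - A) * cnj (C - A))"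
    unfolding P'_eq by (simp only: mult_ac)
  also have "\<dots> = of_real (t * (cmod (P - A))\<^sup>2 * cmod (B - A) * cmod (C - A))"
    unfolding direction[OF \<open>B - A \<noteq> 0\<close>] direction[OF \<open>C - A \<noteq> 0\<close>] complex_norm_square[symmetric] of_real_mult ..
  finally show ?thesis
    by (metis Im_complex_of_real)
qed

lemma isogonal_conjugate_unit_circle:
  fixes a b c p p' :: complex
  assumes unit: "cmod a = 1" "cmod b = 1" "cmod c = 1" and distinct: "a \<noteq> b" "a \<noteq> c" "b \<noteq> c"
    and at_a: "Im ((p' - a) * (p - a) * cnj (b - a) * cnj (c - a)) = 0"
    and at_b: "Im ((p' - b) * (p - b) * cnj (c - b) * cnj (a - b)) = 0"
  shows "p + p' + a * b * c * cnj p * cnj p' = a + b + c"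
proof -
  have vertex: "(p' - u) * (p - u) = v * w * (u * cnj p' - 1) * (u * cnj p - 1)"
    if unit: "cmod u = 1" "cmod v = 1" "cmod w = 1" and "u \<noteq> v" "u \<noteq> w"
      and Im: "Im ((p' - u) * (p - u) * cnj (v - u) * cnj (w - u)) = 0" for u v w
  proof -
    have nz: "u \<noteq> 0" "v \<noteq> 0" "w \<noteq> 0"
      using unit by auto
    have "(p' - u) * (p - u) * cnj (v - u) * cnj (w - u) = cnj ((p' - u) * (p - u) * cnj (v - u) * cnj (w - u))"
      using Im by (metis Reals_cnj_iff complex_is_Real_iff)
    then have "(p' - u) * (p - u) * (1/v - 1/u) * (1/w - 1/u) = (cnj p' - 1/u) * (cnj p - 1/u) * (v - u) * (w - u)"
      by (simp add: cnj_unit[OF unit(1)] cnj_unit[OF unit(2)] cnj_unit[OF unit(3)])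
    moreover have "(p' - u) * (p - u) * (1/v - 1/u) * (1/w - 1/u)
        = ((p' - u) * (p - u)) * ((u - v) * (u - w) / (u * u * v * w))"
      using nz by (simp add: field_simps)
    moreover have "(cnj p' - 1/u) * (cnj p - 1/u) * (v - u) * (w - u)
        = (v * w * (u * cnj p' - 1) * (u * cnj p - 1)) * ((u - v) * (u - w) / (u * u * v * w))"
      using nz by (simp add: field_simps)
    moreover have "(u - v) * (u - w) / (u * u * v * w) \<noteq> 0"
      using nz that(4,5) by simp
    ultimately show ?thesis
      by (metis mult_cancel_right)
  qed
  have "(p' - a) * (p - a) = b * c * (a * cnj p' - 1) * (a * cnj p - 1)"
    using vertex[OF unit distinct(1,2) at_a] .
  moreover have "(p' - b) * (p - b) = c * a * (b * cnj p' - 1) * (b * cnj p - 1)"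
    using vertex[OF unit(2,3,1) distinct(3) distinct(1)[symmetric] at_b] .
  moreover have "((p' - a) * (p - a) - b * c * (a * cnj p' - 1) * (a * cnj p - 1))
      - ((p' - b) * (p - b) - c * a * (b * cnj p' - 1) * (b * cnj p - 1))
      = (a - b) * (a + b + c - p - p' - a * b * c * cnj p * cnj p')"
    by (simp add: algebra_simps)
  ultimately have "(a - b) * (a + b + c - p - p' - a * b * c * cnj p * cnj p') = 0"
    by simp
  then have difference: "a + b + c - p - p' - a * b * c * cnj p * cnj p' = 0"
    using distinct(1) by simp
  have "p + p' + a * b * c * cnj p * cnj p' = (a + b + c) - (a + b + c - p - p' - a * b * c * cnj p * cnj p')"
    by simp
  then show ?thesis
    unfolding difference by simp
qed

text \<open>For t off the unit circle, (s - t - e cnj t + \<sigma> cnj t ^ 2) / (1 - t cnj t) is the isogonal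
  conjugate of t with respect to a triangle inscribed in the unit circle (s, e, \<sigma> being the
  elementary symmetric functions of its vertices). The conic below is therefore the isogonal image of
  the line through p in direction k.\<close>

lemma conic_poly_isogonal_image_of_line:
  "conic_poly (\<i> * k * cnj \<sigma>) (Re (- \<i> * cnj k * p)) (\<i> * cnj k - \<i> * k * cnj e) (Re (- \<i> * cnj k * (s - p))) t
    = Im (cnj k * (s - t - e * cnj t + \<sigma> * (cnj t)\<^sup>2 - p + p * t * cnj t))"
proof -
  have "complex_of_real (conic_poly (\<i> * k * cnj \<sigma>) (Re (- \<i> * cnj k * p)) (\<i> * cnj k - \<i> * k * cnj e)
        (Re (- \<i> * cnj k * (s - p))) t)
      = complex_of_real (Re (- \<i> * cnj k * (s - t - e * cnj t + \<sigma> * (cnj t)\<^sup>2 - p + p * t * cnj t)))"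
    unfolding of_real_conic_poly complex_of_real_Re
    apply (simp only: complex_cnj_mult complex_cnj_add complex_cnj_diff complex_cnj_cnj complex_cnj_i
        complex_cnj_minus complex_cnj_power)
    apply (simp add: field_simps power2_eq_square)
    done
  then show ?thesis
    by (simp only: of_real_eq_iff) simp
qed

section \<open>The configuration in circumcircle coordinates\<close>

locale isogonal_config =
  fixes A B C P P' D X c0 :: complex and R :: real
  assumes R_pos: "R > 0"
    and on_circumcircle: "cmod (A - c0) = R" "cmod (B - c0) = R" "cmod (C - c0) = R"
      "cmod (D - c0) = R" "cmod (X - c0) = R"
    and triangle: "\<not> collinear {A, B, C}"
    and P_off_sides: "P \<notin> line A B" "P \<notin> line B C" "P \<notin> line C A"
    and P_off_circumcircle: "cmod (P - c0) \<noteq> R"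
    and isogonal: "isogonal_conjugate A B C P P'"
    and P'_ne_P: "P' \<noteq> P"
    and D_on_circumconics: "\<And>K. is_conic K \<Longrightarrow> {A, B, C, P, P'} \<subseteq> K \<Longrightarrow> D \<in> K"
    and D_not_vertex: "D \<notin> {A, B, C}"
    and X_on_DP: "X \<in> line D P" and X_ne_D: "X \<noteq> D"
    and X_not_vertex: "X \<notin> {A, B, C}"
begin

definition coord :: "complex \<Rightarrow> complex" where
  "coord z = (z - c0) / of_real R"

lemma coord_eq_iff [simp]: "coord z = coord w \<longleftrightarrow> z = w"
  unfolding coord_def using R_pos by (auto simp: divide_cancel_right)

lemma diff_eq_coord: "z - w = of_real R * (coord z - coord w)"
  unfolding coord_def using R_pos by (simp add: field_simps)

lemma cmod_coord_eq_1_iff: "cmod (coord z) = 1 \<longleftrightarrow> cmod (z - c0) = R"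
  unfolding coord_def using R_pos by (auto simp: norm_divide)

lemma collinear_coord_iff: "collinear {coord U, coord W, coord Z} \<longleftrightarrow> collinear {U, W, Z}"
  unfolding coord_def using R_pos by (intro collinear_affine_iff) simp

lemma coord_mem_line: "z \<in> line U W \<Longrightarrow> coord z \<in> line (coord U) (coord W)"
proof -
  assume "z \<in> line U W"
  then obtain t :: real where "z = U + t * (W - U)"
    unfolding mem_line_iff by blast
  then have "of_real R * (coord z - coord U) = of_real R * (t * (coord W - coord U))"
    unfolding diff_eq_coord[symmetric] by (simp add: diff_eq_coord[of W U] mult.left_commute)
  then have "coord z - coord U = t * (coord W - coord U)"
    using R_pos by simp
  then have "coord z = coord U + t * (coord W - coord U)"
    by (metis add.commute diff_add_cancel)
  then show ?thesis
    unfolding mem_line_iff by blast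
qed

lemma conic_poly_coord:
  "conic_poly \<alpha> \<beta> \<gamma> \<delta> z = conic_poly (\<alpha> * (of_real R)\<^sup>2) (\<beta> * R\<^sup>2)
     (2 * \<alpha> * c0 * R + 2 * complex_of_real \<beta> * cnj c0 * R + \<gamma> * R) (conic_poly \<alpha> \<beta> \<gamma> \<delta> c0) (coord z)"
proof -
  have "z = c0 + of_real R * coord z"
    unfolding coord_def using R_pos by simp
  then show ?thesis
    using conic_poly_affine[of \<alpha> \<beta> \<gamma> \<delta> c0 "of_real R" "coord z"] by simp
qed

definition a where "a = coord A"
definition b where "b = coord B"
definition c where "c = coord C"
definition d where "d = coord D"
definition x where "x = coord X"
definition p where "p = coord P"
definition p' where "p' = coord P'"
definition q where "q = cnj p"
definition q' where "q' = cnj p'"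
definition \<sigma> where "\<sigma> = a * b * c"
definition s where "s = a + b + c"
definition e where "e = a * b + b * c + c * a"

text \<open>A nonzero z is parallel to PP' exactly when z = \<kappa> * cnj z (see P'_direction).\<close>
definition \<kappa> where "\<kappa> = - \<sigma> / d"

lemma unit_points: "cmod a = 1" "cmod b = 1" "cmod c = 1" "cmod d = 1" "cmod x = 1"
  unfolding a_def b_def c_def d_def x_def cmod_coord_eq_1_iff using on_circumcircle by auto

lemma cnj_points: "cnj a = 1 / a" "cnj b = 1 / b" "cnj c = 1 / c" "cnj d = 1 / d" "cnj x = 1 / x"
  using cnj_unit unit_points by auto

lemma points_nonzero: "a \<noteq> 0" "b \<noteq> 0" "c \<noteq> 0" "d \<noteq> 0" "x \<noteq> 0" "\<sigma> \<noteq> 0"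
  using unit_points unfolding \<sigma>_def by auto

lemma p_not_unit: "cmod p \<noteq> 1"
  unfolding p_def cmod_coord_eq_1_iff using P_off_circumcircle .

lemma vertices_distinct: "A \<noteq> B" "A \<noteq> C" "B \<noteq> C"
  using triangle by (auto simp: collinear_2 insert_absorb2 insert_commute)

lemma points_distinct:
  "a \<noteq> b" "a \<noteq> c" "b \<noteq> c" "d \<noteq> a" "d \<noteq> b" "d \<noteq> c" "x \<noteq> a" "x \<noteq> b" "x \<noteq> c" "x \<noteq> d"
  "p \<noteq> x" "p \<noteq> d" "p' \<noteq> p"
proof -
  show "a \<noteq> b" "a \<noteq> c" "b \<noteq> c" "d \<noteq> a" "d \<noteq> b" "d \<noteq> c" "x \<noteq> a" "x \<noteq> b" "x \<noteq> c" "x \<noteq> d" "p' \<noteq> p"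
    unfolding a_def b_def c_def d_def x_def p_def p'_def coord_eq_iff
    using vertices_distinct D_not_vertex X_not_vertex X_ne_D P'_ne_P by auto
  show "p \<noteq> x" "p \<noteq> d"
    using unit_points p_not_unit by auto
qed

lemma isogonal_relation: "p + p' + \<sigma> * q * q' = s"
proof -
  have scaled: "Im (w1 * w2 * cnj w3 * cnj w4) = 0"
    if "Im ((R * w1) * (R * w2) * cnj (R * w3) * cnj (R * w4)) = 0" for w1 w2 w3 w4 :: complex
  proof -
    have "(R * w1) * (R * w2) * cnj (R * w3) * cnj (R * w4) = of_real (R ^ 4) * (w1 * w2 * cnj w3 * cnj w4)"
      by (simp add: power4_eq_xxxx mult_ac)
    moreover have "Im (of_real r * w) = r * Im w" for r w
      by simp
    ultimately have "R ^ 4 * Im (w1 * w2 * cnj w3 * cnj w4) = 0"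
      using that by metis
    then show ?thesis
      using R_pos by simp
  qed
  have "Im ((P' - A) * (P - A) * cnj (B - A) * cnj (C - A)) = 0"
    using isogonal_line_Im[OF triangle] isogonal unfolding isogonal_conjugate_def by blast
  then have at_a: "Im ((p' - a) * (p - a) * cnj (b - a) * cnj (c - a)) = 0"
    unfolding a_def b_def c_def p_def p'_def diff_eq_coord[of _ A] by (rule scaled)
  have "\<not> collinear {B, C, A}"
    using triangle by (simp add: insert_commute)
  then have "Im ((P' - B) * (P - B) * cnj (C - B) * cnj (A - B)) = 0"
    using isogonal_line_Im isogonal unfolding isogonal_conjugate_def by blast
  then have at_b: "Im ((p' - b) * (p - b) * cnj (c - b) * cnj (a - b)) = 0"
    unfolding a_def b_def c_def p_def p'_def diff_eq_coord[of _ B] by (rule scaled)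
  show ?thesis
    using isogonal_conjugate_unit_circle[OF unit_points(1-3) points_distinct(1-3) at_a at_b]
    unfolding \<sigma>_def s_def q_def q'_def by (simp add: mult.assoc)
qed

lemma isogonal_relation_cnj: "\<sigma> * q + \<sigma> * q' + p * p' = e"
proof -
  have "cnj (p + p' + \<sigma> * q * q') = cnj s"
    using isogonal_relation by simp
  then have "q + q' + (1/a) * (1/b) * (1/c) * p * p' = 1/a + 1/b + 1/c"
    unfolding \<sigma>_def s_def q_def q'_def by (simp only: complex_cnj_mult complex_cnj_add complex_cnj_cnj cnj_points)
  then have "\<sigma> * (q + q' + (1/a) * (1/b) * (1/c) * p * p') = \<sigma> * (1/a + 1/b + 1/c)"
    by simp
  moreover have "\<sigma> * (q + q' + (1/a) * (1/b) * (1/c) * p * p') = \<sigma> * q + \<sigma> * q' + p * p'"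
    unfolding \<sigma>_def using points_nonzero by (simp add: field_simps)
  moreover have "\<sigma> * (1/a + 1/b + 1/c) = e"
    unfolding \<sigma>_def e_def using points_nonzero by (simp add: field_simps)
  ultimately show ?thesis
    by simp
qed

lemma is_conic_coord_preimage:
  assumes "\<alpha> \<noteq> 0 \<or> \<beta> \<noteq> 0"
  shows "is_conic {z. conic_poly \<alpha> \<beta> \<gamma> \<delta> (coord z) = 0}"
proof -
  have "coord z = - c0 / of_real R + 1 / of_real R * z" for z
    unfolding coord_def by (simp add: diff_divide_distrib)
  then have "{z. conic_poly \<alpha> \<beta> \<gamma> \<delta> (coord z) = 0} = {z. conic_poly (\<alpha> * (1 / of_real R)\<^sup>2)
      (\<beta> * (cmod (1 / of_real R))\<^sup>2) (2 * \<alpha> * (- c0 / of_real R) * (1 / of_real R)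
        + 2 * complex_of_real \<beta> * cnj (- c0 / of_real R) * (1 / of_real R) + \<gamma> * (1 / of_real R))
      (conic_poly \<alpha> \<beta> \<gamma> \<delta> (- c0 / of_real R)) z = 0}"
    by (simp only: conic_poly_affine)
  moreover have "\<alpha> * (1 / of_real R)\<^sup>2 \<noteq> 0 \<or> \<beta> * (cmod (1 / of_real R))\<^sup>2 \<noteq> 0"
    using assms R_pos by auto
  ultimately show ?thesis
    unfolding is_conic_iff_conic_poly by blast
qed

lemma circumconic_coord:
  assumes "t \<in> {a, b, c, d}"
  shows "conic_poly (\<i> * (p' - p) * cnj \<sigma>) (Re (- \<i> * cnj (p' - p) * p))
    (\<i> * cnj (p' - p) - \<i> * (p' - p) * cnj e) (Re (- \<i> * cnj (p' - p) * (s - p))) t = 0"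
    (is "conic_poly ?\<alpha> ?\<beta> ?\<gamma> ?\<delta> t = 0")
proof -
  define k where "k = p' - p"
  define E where "E t = s - t - e * cnj t + \<sigma> * (cnj t)\<^sup>2 - p + p * t * cnj t" for t
  have K_eq: "conic_poly ?\<alpha> ?\<beta> ?\<gamma> ?\<delta> t = Im (cnj k * E t)" for t
    unfolding k_def E_def by (rule conic_poly_isogonal_image_of_line)
  have vertices: "E a = 0" "E b = 0" "E c = 0"
    unfolding E_def cnj_points s_def e_def \<sigma>_def using points_nonzero
    by (simp_all add: field_simps power2_eq_square)
  have "E p' = (s - (p + p' + \<sigma> * q * q')) + q' * ((\<sigma> * q + \<sigma> * q' + p * p') - e)"
    unfolding E_def q_def q'_def by (simp add: algebra_simps power2_eq_square)
  then have at_p': "E p' = 0"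
    unfolding isogonal_relation isogonal_relation_cnj by simp
  have "E p = (s - (p + p' + \<sigma> * q * q')) + q * ((\<sigma> * q + \<sigma> * q' + p * p') - e) + k * (1 - p * q)"
    unfolding E_def k_def q_def q'_def by (simp add: algebra_simps power2_eq_square)
  then have "E p = k * (1 - p * q)"
    unfolding isogonal_relation isogonal_relation_cnj by simp
  then have "cnj k * E p = (k * cnj k) * (1 - p * cnj p)"
    unfolding q_def by (simp only: mult_ac)
  also have "\<dots> = of_real ((cmod k)\<^sup>2 * (1 - (cmod p)\<^sup>2))"
    by (simp only: of_real_mult of_real_diff of_real_1 complex_norm_square)
  finally have at_p: "Im (cnj k * E p) = 0"
    by (metis Im_complex_of_real)
  have on_K: "conic_poly ?\<alpha> ?\<beta> ?\<gamma> ?\<delta> t = 0" if "t \<in> {a, b, c, p, p'}" for t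
    using that vertices at_p' at_p unfolding K_eq by auto
  have "?\<alpha> \<noteq> 0"
    using points_distinct(13) points_nonzero(6) by simp
  then have "is_conic {z. conic_poly ?\<alpha> ?\<beta> ?\<gamma> ?\<delta> (coord z) = 0}"
    by (intro is_conic_coord_preimage) simp
  moreover have "{A, B, C, P, P'} \<subseteq> {z. conic_poly ?\<alpha> ?\<beta> ?\<gamma> ?\<delta> (coord z) = 0}"
    using on_K unfolding a_def b_def c_def p_def p'_def by auto
  ultimately have "conic_poly ?\<alpha> ?\<beta> ?\<gamma> ?\<delta> d = 0"
    using D_on_circumconics unfolding d_def by blast
  then show ?thesis
    using assms on_K by auto
qed

lemma P'_direction: "p' - p = \<kappa> * cnj (p' - p)"
proof -
  define k where "k = p' - p"
  have "cnj (\<i> * k * cnj \<sigma>) = (\<i> * k * cnj \<sigma>) * (a * b * c * d)"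
    unfolding k_def using circumconic_coord points_distinct
    by (intro conic_poly_unit_circle_vieta(1)[OF unit_points(1-4)]) auto
  moreover have "cnj \<sigma> * \<sigma> = 1"
    unfolding \<sigma>_def cnj_points complex_cnj_mult using points_nonzero by simp
  ultimately have "\<i> * (- cnj k * \<sigma>) = \<i> * (k * d)"
    unfolding \<sigma>_def[symmetric] by (simp add: algebra_simps)
  moreover have "\<i> * (k * d + \<sigma> * cnj k) = \<i> * (k * d) - \<i> * (- cnj k * \<sigma>)"
    by (simp add: algebra_simps)
  ultimately have "k * d + \<sigma> * cnj k = 0"
    by simp
  then show ?thesis
    unfolding \<kappa>_def k_def[symmetric] using points_nonzero by (simp add: field_simps eq_neg_iff_add_eq_0)
qed

lemma P_on_chord_DX: "collinear {p, d, x}"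
proof -
  have "collinear {D, P, X}"
    using X_on_DP by (rule collinear_if_mem_line)
  then have "collinear {d, p, x}"
    unfolding d_def p_def x_def collinear_coord_iff .
  then show ?thesis
    by (simp add: insert_commute)
qed

lemma X_relation: "x * (d * q - 1) = d - p"
proof -
  have chord: "p + d * x * q = d + x"
    using P_on_chord_DX unit_chord_collinear_iff[OF unit_points(4,5) points_distinct(10)[symmetric]]
    unfolding q_def by blast
  have "x * (d * q - 1) - (d - p) = (p + d * x * q) - (d + x)"
    by (simp add: algebra_simps)
  then show ?thesis
    unfolding chord by simp
qed

lemma base_points_general_position:
  "\<not> collinear {a, b, c}" "\<not> collinear {a, b, p}" "\<not> collinear {a, b, x}" "\<not> collinear {a, c, p}"
  "\<not> collinear {a, c, x}" "\<not> collinear {a, p, x}" "\<not> collinear {b, c, p}" "\<not> collinear {b, c, x}"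
  "\<not> collinear {b, p, x}" "\<not> collinear {c, p, x}"
proof -
  have unit0: "cmod (a - 0) = 1" "cmod (b - 0) = 1" "cmod (c - 0) = 1" "cmod (d - 0) = 1" "cmod (x - 0) = 1"
    using unit_points by auto
  have "collinear {x, p, d}"
    using P_on_chord_DX by (simp add: insert_commute)
  have off_chord: "\<not> collinear {t, p, x}" if "cmod t = 1" "t \<noteq> x" "t \<noteq> d" for t
  proof
    assume "collinear {t, p, x}"
    then have "collinear {t, x, p}"
      by (simp add: insert_commute)
    then have "collinear {t, x, d}"
      using \<open>collinear {x, p, d}\<close> points_distinct(11)[symmetric] by (rule collinear_3_trans)
    moreover have "\<not> collinear {t, x, d}"
      using concyclic_not_collinear[of t 0 1 x d] that unit_points(4,5) points_distinct(10) by auto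
    ultimately show False
      by simp
  qed
  show "\<not> collinear {a, b, c}"
    unfolding a_def b_def c_def collinear_coord_iff by (rule triangle)
  have "\<not> collinear {a, b, p}" "\<not> collinear {b, c, p}" "\<not> collinear {c, a, p}"
    unfolding a_def b_def c_def p_def collinear_coord_iff
    using not_collinear_if_not_mem_line[OF vertices_distinct(1) P_off_sides(1)]
      not_collinear_if_not_mem_line[OF vertices_distinct(3) P_off_sides(2)]
      not_collinear_if_not_mem_line[OF vertices_distinct(2)[symmetric] P_off_sides(3)] .
  then show "\<not> collinear {a, b, p}" "\<not> collinear {b, c, p}" "\<not> collinear {a, c, p}"
    by (simp_all add: insert_commute)
  show "\<not> collinear {a, b, x}" "\<not> collinear {a, c, x}" "\<not> collinear {b, c, x}"
    using concyclic_not_collinear[of a 0 1 b x] concyclic_not_collinear[of a 0 1 c x]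
      concyclic_not_collinear[of b 0 1 c x] unit0 points_distinct by auto
  show "\<not> collinear {a, p, x}" "\<not> collinear {b, p, x}" "\<not> collinear {c, p, x}"
    using off_chord unit_points points_distinct by auto
qed

lemma PX_direction: "p - x = - (x * d) * cnj (p - x)"
proof -
  have "- (x * d) * cnj (p - x) = d * (1 - x * q)"
    unfolding q_def using points_nonzero by (simp add: cnj_points field_simps)
  moreover have "d * (1 - x * q) - (p - x) = (d - p) - x * (d * q - 1)"
    by (simp add: algebra_simps)
  then have "d * (1 - x * q) = p - x"
    unfolding X_relation by simp
  ultimately show ?thesis
    by simp
qed

lemma P'_relation: "d * (p' - p) = - \<sigma> * (q' - q)"
proof -
  have "d * (p' - p) = d * \<kappa> * cnj (p' - p)"
    using P'_direction by (metis mult.assoc)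
  then show ?thesis
    unfolding \<kappa>_def q_def q'_def using points_nonzero by simp
qed

definition \<nu> where "\<nu> = s - 2 * p - \<sigma> * q * q"

lemma \<nu>_eq: "\<nu> = (1 - d * q) * (p' - p)"
proof -
  have "(1 - d * q) * (p' - p) - \<nu> = (p + p' + \<sigma> * q * q' - s) - q * (d * (p' - p) + \<sigma> * (q' - q))"
    unfolding \<nu>_def by (simp add: algebra_simps)
  then show ?thesis
    using isogonal_relation P'_relation by simp
qed

lemma x_mul_\<nu>: "x * \<nu> = e - 2 * \<sigma> * q - p * p"
proof -
  have "(p - d) * (p' - p) - (e - 2 * \<sigma> * q - p * p)
      = (\<sigma> * q + \<sigma> * q' + p * p' - e) - (d * (p' - p) + \<sigma> * (q' - q))"
    by (simp add: algebra_simps)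
  then have "(p - d) * (p' - p) = e - 2 * \<sigma> * q - p * p"
    using isogonal_relation_cnj P'_relation by simp
  moreover have "x * (1 - d * q) = p - d"
    using X_relation by (simp add: algebra_simps)
  ultimately show ?thesis
    unfolding \<nu>_eq by (metis mult.assoc)
qed

lemma q'_relation: "\<sigma> * (q' - q) * (p * q - 1) = (p - x) * \<nu>"
proof -
  have "\<sigma> * (q' - q) * (p * q - 1) - (p - x) * \<nu>
      = (d * (p' - p) + \<sigma> * (q' - q)) * (p * q - 1) - (p' - p) * (x * (d * q - 1) - (d - p))"
    unfolding \<nu>_eq by (simp add: algebra_simps)
  then show ?thesis
    using P'_relation X_relation by simp
qed

lemma \<kappa>_nonzero: "\<kappa> \<noteq> 0"
  unfolding \<kappa>_def using points_nonzero by simp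

lemma \<kappa>_relation: "\<kappa> * (p - x) = \<sigma> * (x * q - 1)"
proof -
  have "d * (x * q - 1) - (x - p) = x * (d * q - 1) - (d - p)"
    by (simp add: algebra_simps)
  then have "d * (x * q - 1) = x - p"
    unfolding X_relation by simp
  have "\<kappa> * (p - x) = (\<sigma> / d) * (x - p)"
    unfolding \<kappa>_def by (metis minus_diff_eq minus_divide_left mult_minus_left mult_minus_right)
  also have "\<dots> = (\<sigma> / d) * (d * (x * q - 1))"
    unfolding \<open>d * (x * q - 1) = x - p\<close> ..
  also have "\<dots> = \<sigma> * (x * q - 1)"
    using points_nonzero by simp
  finally show ?thesis .
qed

end

locale isogonal_conic_config = isogonal_config +
  fixes \<alpha> :: complex and \<beta> :: real and \<gamma> :: complex and \<delta> :: real
  assumes C1_nondegenerate: "\<alpha> \<noteq> 0 \<or> \<beta> \<noteq> 0"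
    and C1_through: "conic_poly \<alpha> \<beta> \<gamma> \<delta> A = 0" "conic_poly \<alpha> \<beta> \<gamma> \<delta> B = 0"
      "conic_poly \<alpha> \<beta> \<gamma> \<delta> C = 0" "conic_poly \<alpha> \<beta> \<gamma> \<delta> P = 0" "conic_poly \<alpha> \<beta> \<gamma> \<delta> X = 0"
begin

definition \<alpha>1 where "\<alpha>1 = \<alpha> * (of_real R)\<^sup>2"
definition \<beta>1 where "\<beta>1 = \<beta> * R\<^sup>2"
definition \<gamma>1 where "\<gamma>1 = 2 * \<alpha> * c0 * R + 2 * complex_of_real \<beta> * cnj c0 * R + \<gamma> * R"
definition \<delta>1 where "\<delta>1 = conic_poly \<alpha> \<beta> \<gamma> \<delta> c0"

lemma C1_coord: "conic_poly \<alpha> \<beta> \<gamma> \<delta> z = conic_poly \<alpha>1 \<beta>1 \<gamma>1 \<delta>1 (coord z)"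
  unfolding \<alpha>1_def \<beta>1_def \<gamma>1_def \<delta>1_def by (rule conic_poly_coord)

lemma C1_points:
  "conic_poly \<alpha>1 \<beta>1 \<gamma>1 \<delta>1 a = 0" "conic_poly \<alpha>1 \<beta>1 \<gamma>1 \<delta>1 b = 0" "conic_poly \<alpha>1 \<beta>1 \<gamma>1 \<delta>1 c = 0"
  "conic_poly \<alpha>1 \<beta>1 \<gamma>1 \<delta>1 p = 0" "conic_poly \<alpha>1 \<beta>1 \<gamma>1 \<delta>1 x = 0"
  using C1_through unfolding C1_coord a_def b_def c_def p_def x_def .

lemma C1_vieta:
  "cnj \<alpha>1 = \<alpha>1 * (\<sigma> * x)" "\<gamma>1 = - \<alpha>1 * (s + x)"
  "2 * complex_of_real \<delta>1 = \<alpha>1 * (e + s * x) - 2 * complex_of_real \<beta>1"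
  "cnj \<gamma>1 = - \<alpha>1 * (\<sigma> + e * x)"
proof -
  note vieta = conic_poly_unit_circle_vieta[OF unit_points(1-3,5) points_distinct(1,2)
      points_distinct(7)[symmetric] points_distinct(3) points_distinct(8)[symmetric]
      points_distinct(9)[symmetric] C1_points(1-3,5)]
  show "cnj \<alpha>1 = \<alpha>1 * (\<sigma> * x)"
    using vieta(1) unfolding \<sigma>_def by (simp add: mult_ac)
  show "\<gamma>1 = - \<alpha>1 * (s + x)"
    using vieta(2) unfolding s_def by (simp add: algebra_simps)
  show "2 * complex_of_real \<delta>1 = \<alpha>1 * (e + s * x) - 2 * complex_of_real \<beta>1"
    using vieta(3) unfolding s_def e_def by (simp add: algebra_simps)
  show "cnj \<gamma>1 = - \<alpha>1 * (\<sigma> + e * x)"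
    using vieta(4) unfolding \<sigma>_def e_def by (simp add: algebra_simps)
qed

lemma C1_normal_form:
  "2 * complex_of_real (conic_poly \<alpha>1 \<beta>1 \<gamma>1 \<delta>1 t)
     = \<alpha>1 * (t * t - (s + x) * t + (e + s * x) - (\<sigma> + e * x) * cnj t + \<sigma> * x * cnj t * cnj t)
       + 2 * complex_of_real \<beta>1 * (t * cnj t - 1)"
proof -
  have "2 * complex_of_real (conic_poly \<alpha>1 \<beta>1 \<gamma>1 \<delta>1 t) = \<alpha>1 * t\<^sup>2 + cnj \<alpha>1 * (cnj t)\<^sup>2
      + 2 * complex_of_real \<beta>1 * t * cnj t + \<gamma>1 * t + cnj \<gamma>1 * cnj t + 2 * complex_of_real \<delta>1"
    unfolding of_real_conic_poly by simp
  also have "\<dots> = \<alpha>1 * (t * t - (s + x) * t + (e + s * x) - (\<sigma> + e * x) * cnj t + \<sigma> * x * cnj t * cnj t)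
       + 2 * complex_of_real \<beta>1 * (t * cnj t - 1)"
    unfolding C1_vieta(4) unfolding C1_vieta(1-3) by (simp add: algebra_simps power2_eq_square)
  finally show ?thesis .
qed

lemma \<alpha>1_nonzero: "\<alpha>1 \<noteq> 0"
proof
  assume "\<alpha>1 = 0"
  then have "2 * complex_of_real \<beta>1 * (p * cnj p - 1) = 0"
    using C1_normal_form[of p] C1_points(4) by simp
  moreover have "2 * complex_of_real \<beta>1 * (p * cnj p - 1) = of_real (2 * \<beta>1 * ((cmod p)\<^sup>2 - 1))"
    by (simp only: of_real_mult of_real_diff of_real_1 complex_norm_square of_real_numeral)
  ultimately have "complex_of_real (2 * \<beta>1 * ((cmod p)\<^sup>2 - 1)) = 0"
    by metis
  then have "\<beta>1 * ((cmod p)\<^sup>2 - 1) = 0"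
    by (simp only: of_real_eq_0_iff mult_eq_0_iff) simp
  moreover have "(cmod p)\<^sup>2 \<noteq> 1"
    using p_not_unit norm_ge_zero[of p] unfolding power2_eq_1_iff by linarith
  ultimately have "\<beta>1 = 0"
    by simp
  then show False
    using \<open>\<alpha>1 = 0\<close> C1_nondegenerate R_pos unfolding \<alpha>1_def \<beta>1_def by simp
qed

definition \<rho> where "\<rho> = 2 * complex_of_real \<beta>1 / \<alpha>1"

lemma \<rho>_relation:
  "\<rho> * (p * q - 1) = - (p * p - (s + x) * p + (e + s * x) - (\<sigma> + e * x) * q + \<sigma> * x * q * q)"
proof -
  have "\<alpha>1 * (p * p - (s + x) * p + (e + s * x) - (\<sigma> + e * x) * q + \<sigma> * x * q * q)
      + 2 * complex_of_real \<beta>1 * (p * q - 1) = 0"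
    using C1_normal_form[of p] C1_points(4) unfolding q_def by simp
  then show ?thesis
    unfolding \<rho>_def using \<alpha>1_nonzero by (simp add: field_simps eq_neg_iff_add_eq_0)
qed

lemma chord_direction:
  assumes on_C1: "conic_poly \<alpha> \<beta> \<gamma> \<delta> X1 = 0" "conic_poly \<alpha> \<beta> \<gamma> \<delta> X2 = 0"
    and cyclic: "concyclic {P, X, X1, X2}"
    and distinct: "X1 \<noteq> X2" "X1 \<notin> {P, X}" "X2 \<notin> {P, X}"
  shows "X1 - X2 = \<kappa> * cnj (X1 - X2)"
proof -
  obtain c2 and r2 :: real where "{P, X, X1, X2} \<subseteq> {z. cmod (z - c2) = r2}"
    using cyclic unfolding concyclic_def is_circle_def by blast
  then have circle: "cmod (P - c2) = r2" "cmod (X - c2) = r2" "cmod (X1 - c2) = r2" "cmod (X2 - c2) = r2"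
    by auto
  have "P \<noteq> X"
    using P_off_circumcircle on_circumcircle(5) by auto
  then have "\<alpha> * (P - X) * (X1 - X2) \<in> \<real>"
    using distinct C1_through(4,5) on_C1 by (intro conic_poly_concyclic_chords[OF circle]) auto
  then have "of_real R * (\<alpha> * (P - X) * (X1 - X2)) \<in> \<real>"
    by simp
  then have real: "cnj (\<alpha>1 * (p - x) * (X1 - X2)) = \<alpha>1 * (p - x) * (X1 - X2)"
    unfolding \<alpha>1_def p_def x_def diff_eq_coord[of P X] Reals_cnj_iff by (simp add: power2_eq_square mult_ac)
  have cnj_PX: "cnj (p - x) = (p - x) / (- (x * d))"
    using PX_direction points_nonzero by (simp add: field_simps)
  have "cnj (\<alpha>1 * (p - x) * (X1 - X2)) = (\<alpha>1 * (\<sigma> * x)) * ((p - x) / (- (x * d))) * cnj (X1 - X2)"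
    by (simp only: complex_cnj_mult C1_vieta(1) cnj_PX)
  also have "\<dots> = (\<alpha>1 * (p - x)) * (\<kappa> * cnj (X1 - X2))"
    unfolding \<kappa>_def using points_nonzero by (simp add: field_simps)
  finally have "(\<alpha>1 * (p - x)) * (X1 - X2) = (\<alpha>1 * (p - x)) * (\<kappa> * cnj (X1 - X2))"
    unfolding real .
  moreover have "\<alpha>1 * (p - x) \<noteq> 0"
    using \<alpha>1_nonzero points_distinct(11) by simp
  ultimately show ?thesis
    using mult_left_cancel by blast
qed

lemma parallel_to_PP':
  assumes "conic_poly \<alpha> \<beta> \<gamma> \<delta> X1 = 0" "conic_poly \<alpha> \<beta> \<gamma> \<delta> X2 = 0" "concyclic {P, X, X1, X2}"
    and "X1 \<noteq> X2" "X1 \<notin> {P, X}" "X2 \<notin> {P, X}"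
    and Z: "Z \<in> line P P'" "Z \<noteq> P"
  shows "parallel_lines (line X1 X2) (line P Z)"
proof (rule parallel_lines_if_Im[OF \<open>X1 \<noteq> X2\<close> Z(2)[symmetric]])
  obtain t :: real where "Z = P + t * (P' - P)"
    using Z(1) unfolding mem_line_iff by blast
  then have Z_minus_P: "Z - P = of_real (t * R) * (p' - p)"
    unfolding p_def p'_def using diff_eq_coord[of P' P] by simp
  have "X2 - X1 = \<kappa> * cnj (X2 - X1)"
    using chord_direction[OF assms(1-6)] by (metis complex_cnj_diff minus_diff_eq mult_minus_right)
  then have "Im ((X2 - X1) * cnj (p' - p)) = 0"
    using P'_direction \<kappa>_nonzero by (rule Im_mult_cnj_eq_0_if_same_direction)
  then show "Im ((X2 - X1) * cnj (Z - P)) = 0"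
    unfolding Z_minus_P by (simp add: mult.left_commute[of "X2 - X1"])
qed

lemma C1_contains_no_line:
  assumes "v \<noteq> 0"
  shows "\<not> (\<forall>s. conic_poly \<alpha>1 \<beta>1 \<gamma>1 \<delta>1 (w + v * of_real s) = 0)"
  using conic_poly_contains_no_line[OF disjI1[OF \<alpha>1_nonzero] assms C1_points base_points_general_position] .

section \<open>Second intersections with the circumcircle\<close>

definition h where "h = 2 * \<alpha>1 * x + 2 * complex_of_real \<beta>1 * cnj x + \<gamma>1"
definition N where "N w = h * w + cnj h"
definition M where "M w = \<alpha>1 * w\<^sup>2 + 2 * complex_of_real \<beta>1 * w + cnj \<alpha>1"

lemma cnj_chord_from_x:
  assumes "cmod u = 1"
  shows "cnj (u - x) = (u - x) / (- x * u)"
proof -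
  have "u \<noteq> 0"
    using assms by auto
  have "cnj (u - x) = 1 / u - 1 / x"
    using cnj_unit[OF assms] cnj_points(5) by simp
  also have "\<dots> = (u - x) / (- x * u)"
    using \<open>u \<noteq> 0\<close> points_nonzero(5) by (simp add: field_simps)
  finally show ?thesis .
qed

text \<open>The linear and quadratic coefficients of the conic equation along the chord from x towards u,
  as in conic_poly_on_line.\<close>

lemma conic_coeffs_along_chord:
  assumes "cmod u = 1" and w: "w = - x * u"
  shows "complex_of_real (Re (h * (u - x))) = (u - x) * N w / (2 * w)"
    and "complex_of_real (Re (\<alpha>1 * (u - x)\<^sup>2) + \<beta>1 * (cmod (u - x))\<^sup>2) = (u - x)\<^sup>2 * M w / (2 * w\<^sup>2)"
proof -
  have cnj_chord: "cnj (u - x) = (u - x) / w"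
    unfolding w by (rule cnj_chord_from_x[OF assms(1)])
  have "w \<noteq> 0"
    using assms points_nonzero(5) by auto
  show "complex_of_real (Re (h * (u - x))) = (u - x) * N w / (2 * w)"
    unfolding complex_of_real_Re N_def
    by (simp only: complex_cnj_mult cnj_chord) (use \<open>w \<noteq> 0\<close> in \<open>simp add: field_simps\<close>)
  show "complex_of_real (Re (\<alpha>1 * (u - x)\<^sup>2) + \<beta>1 * (cmod (u - x))\<^sup>2) = (u - x)\<^sup>2 * M w / (2 * w\<^sup>2)"
    unfolding of_real_add of_real_mult complex_of_real_Re complex_norm_square M_def
    by (simp only: complex_cnj_mult complex_cnj_power cnj_chord)
      (use \<open>w \<noteq> 0\<close> in \<open>simp add: field_simps power2_eq_square\<close>)
qed

lemma second_intersection: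
  assumes u: "cmod u = 1" "u \<noteq> x" and y: "u \<in> line x y" "y \<noteq> x" "conic_poly \<alpha>1 \<beta>1 \<gamma>1 \<delta>1 y = 0"
    and w: "w = - x * u"
  shows "M w * (y - x) = - w * N w" "y - x = w * cnj (y - x)"
proof -
  obtain t :: real where t: "u = x + t * (y - x)"
    using y(1) unfolding mem_line_iff by blast
  have "t \<noteq> 0"
    using t u(2) by auto
  have "w \<noteq> 0"
    using u(1) points_nonzero(5) w by auto
  have y_eq: "y = x + (u - x) * of_real (1 / t)"
    using t \<open>t \<noteq> 0\<close> by (simp add: field_simps)
  define L Q where "L = Re (h * (u - x))" and "Q = Re (\<alpha>1 * (u - x)\<^sup>2) + \<beta>1 * (cmod (u - x))\<^sup>2"
  have "conic_poly \<alpha>1 \<beta>1 \<gamma>1 \<delta>1 (x + (u - x) * of_real (1 / t)) = (1 / t) * L + (1 / t)\<^sup>2 * Q"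
    using conic_poly_on_line[of \<alpha>1 \<beta>1 \<gamma>1 \<delta>1 x "u - x" "1 / t"] C1_points(5)
    unfolding L_def Q_def h_def by simp
  then have "(1 / t) * (L + (1 / t) * Q) = 0"
    using y(3) y_eq by (simp add: power2_eq_square algebra_simps)
  then have "L + (1 / t) * Q = 0"
    using \<open>t \<noteq> 0\<close> by simp
  then have "complex_of_real L + of_real (1 / t) * complex_of_real Q = 0"
    by (metis of_real_0 of_real_add of_real_mult)
  moreover have "(u - x) * (w * N w + of_real (1 / t) * (u - x) * M w)
      = (2 * w\<^sup>2) * ((u - x) * N w / (2 * w) + of_real (1 / t) * ((u - x)\<^sup>2 * M w / (2 * w\<^sup>2)))"
    using \<open>w \<noteq> 0\<close> \<open>t \<noteq> 0\<close> by (simp add: field_simps power2_eq_square)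
  ultimately have "(u - x) * (w * N w + of_real (1 / t) * (u - x) * M w) = 0"
    unfolding L_def Q_def conic_coeffs_along_chord[OF u(1) w] by simp
  then have "w * N w + of_real (1 / t) * (u - x) * M w = 0"
    using u(2) by simp
  have yx: "y - x = (u - x) * of_real (1 / t)"
    using y_eq by simp
  have "M w * (y - x) = of_real (1 / t) * (u - x) * M w"
    unfolding yx by (simp only: mult_ac)
  also have "\<dots> = - (w * N w)"
    using \<open>w * N w + of_real (1 / t) * (u - x) * M w = 0\<close> by (simp add: eq_neg_iff_add_eq_0 add.commute)
  finally show "M w * (y - x) = - w * N w"
    by simp
  have "w * cnj (y - x) = w * ((u - x) / w * of_real (1 / t))"
    unfolding yx w by (simp only: complex_cnj_mult complex_cnj_complex_of_real cnj_chord_from_x[OF u(1)])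
  also have "\<dots> = y - x"
    unfolding yx using \<open>w \<noteq> 0\<close> by simp
  finally show "y - x = w * cnj (y - x)" ..
qed

definition \<mu>2 where "\<mu>2 = h * (2 * complex_of_real \<beta>1) - (cnj h - \<kappa> * h) * \<alpha>1"
definition \<mu>1 where "\<mu>1 = h * cnj \<alpha>1 + \<kappa> * cnj h * \<alpha>1"
definition \<mu>0 where "\<mu>0 = (cnj h - \<kappa> * h) * cnj \<alpha>1 + \<kappa> * cnj h * (2 * complex_of_real \<beta>1)"

lemma involution_relation:
  assumes first: "M w1 * (y1 - x) = - w1 * N w1" "y1 - x = w1 * cnj (y1 - x)"
    and second: "M w2 * (y2 - x) = - w2 * N w2" "y2 - x = w2 * cnj (y2 - x)"
    and w: "w1 \<noteq> 0" "w2 \<noteq> 0" "w1 \<noteq> w2"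
    and parallel: "y1 - y2 = \<kappa> * cnj (y1 - y2)"
  shows "\<mu>2 * w1 * w2 + \<mu>1 * (w1 + w2) + \<mu>0 = 0"
proof -
  have conj: "M w' * cnj (y' - x) = - N w'"
    if "M w' * (y' - x) = - w' * N w'" "y' - x = w' * cnj (y' - x)" "w' \<noteq> 0" for w' y'
  proof -
    have "w' * (M w' * cnj (y' - x)) = M w' * (w' * cnj (y' - x))"
      by (simp only: mult_ac)
    also have "\<dots> = M w' * (y' - x)"
      by (simp only: that(2)[symmetric])
    also have "\<dots> = w' * (- N w')"
      using that(1) by simp
    finally show ?thesis
      using that(3) mult_left_cancel by blast
  qed
  have "M w1 * M w2 * (y1 - y2) = M w2 * (M w1 * (y1 - x)) - M w1 * (M w2 * (y2 - x))"
    by (simp add: algebra_simps)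
  also have "\<dots> = - w1 * N w1 * M w2 + w2 * N w2 * M w1"
    unfolding first(1) second(1) by (simp add: algebra_simps)
  finally have lhs: "M w1 * M w2 * (y1 - y2) = - w1 * N w1 * M w2 + w2 * N w2 * M w1" .
  have "M w1 * M w2 * cnj (y1 - y2) = M w2 * (M w1 * cnj (y1 - x)) - M w1 * (M w2 * cnj (y2 - x))"
    by (simp add: algebra_simps)
  also have "\<dots> = - N w1 * M w2 + N w2 * M w1"
    unfolding conj[OF first w(1)] conj[OF second w(2)] by (simp add: algebra_simps)
  finally have rhs: "M w1 * M w2 * cnj (y1 - y2) = - N w1 * M w2 + N w2 * M w1" .
  have "- w1 * N w1 * M w2 + w2 * N w2 * M w1 = \<kappa> * (- N w1 * M w2 + N w2 * M w1)"
    unfolding lhs[symmetric] rhs[symmetric] by (subst parallel) (simp only: mult_ac)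
  moreover have "(w1 - w2) * (\<mu>2 * w1 * w2 + \<mu>1 * (w1 + w2) + \<mu>0)
      = \<kappa> * (- N w1 * M w2 + N w2 * M w1) - (- w1 * N w1 * M w2 + w2 * N w2 * M w1)"
    unfolding \<mu>2_def \<mu>1_def \<mu>0_def N_def M_def by (simp add: algebra_simps power2_eq_square)
  ultimately show ?thesis
    using w(3) by simp
qed

text \<open>After multiplying by W and p - x, the relations for \<rho>, \<kappa> and q' and the expressions of
  s and e through \<nu> turn the key identity below into a polynomial identity.\<close>

lemma \<rho>_identity_cleared:
  defines "W \<equiv> p * q - 1"
  shows "((x * x - s * x + \<rho>) * W) * ((\<rho> + \<kappa> - \<sigma> * q') * (W * (p - x)))
    = ((\<sigma> - e * x + \<rho> * x) * W) * ((x + \<kappa> * q') * (W * (p - x)))"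
proof -
  define \<Phi> where "\<Phi> = p * p - (s + x) * p + (e + s * x) - (\<sigma> + e * x) * q + \<sigma> * x * q * q"
  have s_eq: "s = \<nu> + 2 * p + \<sigma> * q * q"
    unfolding \<nu>_def by simp
  have e_eq: "e = x * \<nu> + 2 * \<sigma> * q + p * p"
    using x_mul_\<nu> by (simp add: algebra_simps)
  have \<rho>W: "\<rho> * W = - \<Phi>"
    unfolding W_def \<Phi>_def by (rule \<rho>_relation)
  have q'W: "\<sigma> * q' * W = \<sigma> * q * W + (p - x) * \<nu>"
    using q'_relation unfolding W_def by (simp add: algebra_simps)
  define F1 F2 G1 G2 where "F1 = x * x * W - s * x * W - \<Phi>"
    and "F2 = - \<Phi> * (p - x) + \<sigma> * (x * q - 1) * W - (\<sigma> * q * W + (p - x) * \<nu>) * (p - x)"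
    and "G1 = (\<sigma> - e * x) * W - \<Phi> * x"
    and "G2 = x * W * (p - x) + (x * q - 1) * (\<sigma> * q * W + (p - x) * \<nu>)"
  have identity: "F1 * F2 = G1 * G2"
    unfolding F1_def F2_def G1_def G2_def \<Phi>_def W_def s_eq e_eq by (simp add: algebra_simps)
  have F1: "(x * x - s * x + \<rho>) * W = F1"
    unfolding F1_def using \<rho>W by (simp add: algebra_simps)
  have F2: "(\<rho> + \<kappa> - \<sigma> * q') * (W * (p - x)) = F2"
  proof -
    have "(\<rho> + \<kappa> - \<sigma> * q') * (W * (p - x)) = (\<rho> * W) * (p - x) + (\<kappa> * (p - x)) * W - (\<sigma> * q' * W) * (p - x)"
      by (simp add: algebra_simps)
    then show ?thesis
      unfolding F2_def \<rho>W \<kappa>_relation q'W .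
  qed
  have G1: "(\<sigma> - e * x + \<rho> * x) * W = G1"
  proof -
    have "(\<sigma> - e * x + \<rho> * x) * W = (\<sigma> - e * x) * W + (\<rho> * W) * x"
      by (simp add: algebra_simps)
    then show ?thesis
      unfolding G1_def \<rho>W by simp
  qed
  have G2: "(x + \<kappa> * q') * (W * (p - x)) = G2"
  proof -
    have "(x + \<kappa> * q') * (W * (p - x)) = x * W * (p - x) + (\<kappa> * (p - x)) * q' * W"
      by (simp add: algebra_simps)
    also have "\<dots> = x * W * (p - x) + (x * q - 1) * (\<sigma> * q' * W)"
      unfolding \<kappa>_relation by (simp add: algebra_simps)
    finally show ?thesis
      unfolding G2_def q'W .
  qed
  show ?thesis
    unfolding F1 F2 G1 G2 by (rule identity)
qed

lemma p_q_ne_1: "p * q \<noteq> 1"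
proof
  assume "p * q = 1"
  then have "complex_of_real ((cmod p)\<^sup>2) = 1"
    unfolding q_def complex_norm_square by simp
  then have "(cmod p)\<^sup>2 = 1"
    by (metis of_real_eq_1_iff)
  then show False
    using p_not_unit norm_ge_zero[of p] unfolding power2_eq_1_iff by linarith
qed

lemma \<rho>_identity: "(x * x - s * x + \<rho>) * (\<rho> + \<kappa> - \<sigma> * q') = (\<sigma> - e * x + \<rho> * x) * (x + \<kappa> * q')"
proof -
  have "(p * q - 1) * ((p * q - 1) * (p - x)) \<noteq> 0"
    using p_q_ne_1 points_distinct(11) by simp
  moreover have "((x * x - s * x + \<rho>) * (\<rho> + \<kappa> - \<sigma> * q')) * ((p * q - 1) * ((p * q - 1) * (p - x)))
      = ((\<sigma> - e * x + \<rho> * x) * (x + \<kappa> * q')) * ((p * q - 1) * ((p * q - 1) * (p - x)))"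
    using \<rho>_identity_cleared by (simp only: mult_ac)
  ultimately show ?thesis
    by simp
qed

lemma two_\<beta>1: "2 * complex_of_real \<beta>1 = \<alpha>1 * \<rho>"
  unfolding \<rho>_def using \<alpha>1_nonzero by simp

lemma h_eq: "h * x = \<alpha>1 * (x * x - s * x + \<rho>)"
  unfolding h_def C1_vieta(2) two_\<beta>1 cnj_points(5) using points_nonzero(5) by (simp add: field_simps)

lemma cnj_h_eq: "cnj h = \<alpha>1 * (\<sigma> - e * x + \<rho> * x)"
proof -
  have "cnj h = 2 * cnj \<alpha>1 * cnj x + 2 * complex_of_real \<beta>1 * x + cnj \<gamma>1"
    unfolding h_def by simp
  also have "\<dots> = \<alpha>1 * (\<sigma> - e * x + \<rho> * x)"
    unfolding C1_vieta(1,4) two_\<beta>1 cnj_points(5) using points_nonzero(5) by (simp add: field_simps)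
  finally show ?thesis .
qed

lemma \<mu>2_relation: "\<mu>2 * x = \<mu>1 * q'"
proof -
  have "\<mu>2 * x - \<mu>1 * q' = \<alpha>1 * ((h * x) * (\<rho> + \<kappa> - \<sigma> * q') - cnj h * (x + \<kappa> * q'))"
    unfolding \<mu>2_def \<mu>1_def C1_vieta(1) two_\<beta>1 by (simp add: algebra_simps)
  also have "\<dots> = \<alpha>1 * \<alpha>1 * ((x * x - s * x + \<rho>) * (\<rho> + \<kappa> - \<sigma> * q') - (\<sigma> - e * x + \<rho> * x) * (x + \<kappa> * q'))"
    unfolding h_eq cnj_h_eq by (simp add: algebra_simps)
  also have "\<dots> = 0"
    by (simp add: \<rho>_identity)
  finally show ?thesis
    by simp
qed

lemma cnj_\<kappa>: "cnj \<kappa> = 1 / \<kappa>"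
  unfolding \<kappa>_def \<sigma>_def using points_nonzero by (simp add: cnj_points field_simps)

lemma \<mu>0_relation: "\<mu>0 = x * \<mu>1 * p'"
proof -
  have "cnj (\<mu>2 * x) = cnj (\<mu>1 * q')"
    using \<mu>2_relation by simp
  then have conj: "(cnj h * (2 * complex_of_real \<beta>1) - (h - (1 / \<kappa>) * cnj h) * cnj \<alpha>1) * (1 / x)
      = (cnj h * \<alpha>1 + (1 / \<kappa>) * h * cnj \<alpha>1) * p'"
    unfolding \<mu>2_def \<mu>1_def q'_def
    by (simp only: complex_cnj_mult complex_cnj_diff complex_cnj_add complex_cnj_cnj complex_cnj_complex_of_real
        complex_cnj_numeral cnj_\<kappa> cnj_points(5))
  have "\<mu>0 = (\<kappa> * x) * ((cnj h * (2 * complex_of_real \<beta>1) - (h - (1 / \<kappa>) * cnj h) * cnj \<alpha>1) * (1 / x))"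
    unfolding \<mu>0_def using \<kappa>_nonzero points_nonzero(5) by (simp add: field_simps)
  also have "\<dots> = (\<kappa> * x) * ((cnj h * \<alpha>1 + (1 / \<kappa>) * h * cnj \<alpha>1) * p')"
    unfolding conj ..
  also have "\<dots> = x * \<mu>1 * p'"
    unfolding \<mu>1_def using \<kappa>_nonzero by (simp add: field_simps)
  finally show ?thesis .
qed

lemma \<mu>1_nonzero:
  assumes on_C1: "conic_poly \<alpha>1 \<beta>1 \<gamma>1 \<delta>1 y1 = 0" "conic_poly \<alpha>1 \<beta>1 \<gamma>1 \<delta>1 y2 = 0"
    and "y1 \<noteq> y2" "y1 \<noteq> x" and parallel: "y1 - y2 = \<kappa> * cnj (y1 - y2)"
  shows "\<mu>1 \<noteq> 0"
proof
  assume "\<mu>1 = 0"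
  then have "\<mu>2 = 0"
    using \<mu>2_relation points_nonzero(5) by simp
  have "h * M \<kappa> = \<mu>1 + \<kappa> * \<mu>2"
    unfolding \<mu>1_def \<mu>2_def M_def by (simp add: algebra_simps power2_eq_square)
  then have "h = 0 \<or> M \<kappa> = 0"
    using \<open>\<mu>1 = 0\<close> \<open>\<mu>2 = 0\<close> by simp
  then obtain w v where v: "v \<noteq> 0" and on_line: "conic_poly \<alpha>1 \<beta>1 \<gamma>1 \<delta>1 w = 0"
      "conic_poly \<alpha>1 \<beta>1 \<gamma>1 \<delta>1 (w + v) = 0" and isotropic: "Re (\<alpha>1 * v\<^sup>2) + \<beta>1 * (cmod v)\<^sup>2 = 0"
  proof
    assume "h = 0"
    have "conic_poly \<alpha>1 \<beta>1 \<gamma>1 \<delta>1 (x + (y1 - x) * of_real 1) = conic_poly \<alpha>1 \<beta>1 \<gamma>1 \<delta>1 x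
        + 1 * Re (h * (y1 - x)) + 1\<^sup>2 * (Re (\<alpha>1 * (y1 - x)\<^sup>2) + \<beta>1 * (cmod (y1 - x))\<^sup>2)"
      unfolding h_def by (rule conic_poly_on_line)
    then have "Re (\<alpha>1 * (y1 - x)\<^sup>2) + \<beta>1 * (cmod (y1 - x))\<^sup>2 = 0"
      using on_C1(1) C1_points(5) \<open>h = 0\<close> by simp
    moreover have "y1 - x \<noteq> 0" "conic_poly \<alpha>1 \<beta>1 \<gamma>1 \<delta>1 (x + (y1 - x)) = 0"
      using \<open>y1 \<noteq> x\<close> on_C1(1) by simp_all
    ultimately show thesis
      using that C1_points(5) by blast
  next
    assume "M \<kappa> = 0"
    have cnj_v: "cnj (y1 - y2) = (y1 - y2) / \<kappa>"
      using parallel \<kappa>_nonzero by (simp add: field_simps)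
    have "complex_of_real (Re (\<alpha>1 * (y1 - y2)\<^sup>2) + \<beta>1 * (cmod (y1 - y2))\<^sup>2)
        = (y1 - y2)\<^sup>2 * M \<kappa> / (2 * \<kappa>\<^sup>2)"
      unfolding of_real_add of_real_mult complex_of_real_Re complex_norm_square M_def
      by (simp only: complex_cnj_mult complex_cnj_power cnj_v)
        (use \<kappa>_nonzero in \<open>simp add: field_simps power2_eq_square\<close>)
    then have "Re (\<alpha>1 * (y1 - y2)\<^sup>2) + \<beta>1 * (cmod (y1 - y2))\<^sup>2 = 0"
      unfolding \<open>M \<kappa> = 0\<close> by (simp only: mult_zero_right mult_zero_left div_0 of_real_eq_0_iff)
    moreover have "y1 - y2 \<noteq> 0" "conic_poly \<alpha>1 \<beta>1 \<gamma>1 \<delta>1 (y2 + (y1 - y2)) = 0"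
      using \<open>y1 \<noteq> y2\<close> on_C1(1) by simp_all
    ultimately show thesis
      using that on_C1(2) by blast
  qed
  then show False
    using C1_contains_no_line[OF v, of w] conic_poly_contains_line[OF on_line isotropic] by blast
qed

lemma second_points_on_chord_through_p':
  assumes unit: "cmod u = 1" "cmod v = 1" and "u \<noteq> v"
    and on_C1: "conic_poly \<alpha>1 \<beta>1 \<gamma>1 \<delta>1 y1 = 0" "conic_poly \<alpha>1 \<beta>1 \<gamma>1 \<delta>1 y2 = 0"
    and distinct: "u \<noteq> x" "v \<noteq> x" "y1 \<noteq> x" "y2 \<noteq> x" "y1 \<noteq> y2"
    and lines: "u \<in> line x y1" "v \<in> line x y2"
    and parallel: "y1 - y2 = \<kappa> * cnj (y1 - y2)"
  shows "p' + u * v * q' = u + v"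
proof -
  define w1 w2 where "w1 = - x * u" and "w2 = - x * v"
  have w: "w1 \<noteq> 0" "w2 \<noteq> 0" "w1 \<noteq> w2"
    unfolding w1_def w2_def using unit points_nonzero(5) \<open>u \<noteq> v\<close> by auto
  note first = second_intersection[OF unit(1) distinct(1) lines(1) distinct(3) on_C1(1) w1_def]
  note second = second_intersection[OF unit(2) distinct(2) lines(2) distinct(4) on_C1(2) w2_def]
  have "\<mu>2 * w1 * w2 + \<mu>1 * (w1 + w2) + \<mu>0 = 0"
    by (rule involution_relation[OF first second w parallel])
  moreover have "\<mu>2 * w1 * w2 + \<mu>1 * (w1 + w2) + \<mu>0 = x * \<mu>1 * (p' + u * v * q' - (u + v))"
  proof -
    have "\<mu>2 * w1 * w2 = (\<mu>2 * x) * x * u * v"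
      unfolding w1_def w2_def by (simp add: algebra_simps)
    then show ?thesis
      unfolding w1_def w2_def \<mu>0_relation \<mu>2_relation by (simp add: algebra_simps)
  qed
  moreover have "\<mu>1 \<noteq> 0"
    using \<mu>1_nonzero[OF on_C1 distinct(5,3) parallel] .
  ultimately have "p' + u * v * q' - (u + v) = 0"
    using points_nonzero(5) by simp
  then show ?thesis
    by simp
qed

lemma second_intersections_collinear_with_P':
  assumes on_C1: "conic_poly \<alpha> \<beta> \<gamma> \<delta> X1 = 0" "conic_poly \<alpha> \<beta> \<gamma> \<delta> X2 = 0"
    and cyclic: "concyclic {P, X, X1, X2}"
    and distinct: "X1 \<noteq> X2" "X1 \<notin> {P, X}" "X2 \<notin> {P, X}"
    and X1': "cmod (X1' - c0) = R" "X1' \<in> line X X1" "X1' \<noteq> X"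
    and X2': "cmod (X2' - c0) = R" "X2' \<in> line X X2" "X2' \<noteq> X"
  shows "collinear {P', X1', X2'}"
proof (cases "X1' = X2'")
  case True
  then show ?thesis
    by (simp add: collinear_2)
next
  case False
  define u v y1 y2 where "u = coord X1'" and "v = coord X2'" and "y1 = coord X1" and "y2 = coord X2"
  have unit: "cmod u = 1" "cmod v = 1"
    unfolding u_def v_def cmod_coord_eq_1_iff using X1'(1) X2'(1) .
  have "u \<noteq> v" and distinct': "u \<noteq> x" "v \<noteq> x" "y1 \<noteq> x" "y2 \<noteq> x" "y1 \<noteq> y2"
    unfolding u_def v_def y1_def y2_def x_def coord_eq_iff using X1'(3) X2'(3) False distinct by auto
  have "of_real R * (y1 - y2) = of_real R * (\<kappa> * cnj (y1 - y2))"
    using chord_direction[OF on_C1 cyclic distinct] unfolding y1_def y2_def diff_eq_coord[of X1 X2]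
    by (simp add: mult.left_commute)
  moreover have "complex_of_real R \<noteq> 0"
    using R_pos by simp
  ultimately have "y1 - y2 = \<kappa> * cnj (y1 - y2)"
    using mult_left_cancel by blast
  moreover have "conic_poly \<alpha>1 \<beta>1 \<gamma>1 \<delta>1 y1 = 0" "conic_poly \<alpha>1 \<beta>1 \<gamma>1 \<delta>1 y2 = 0"
    using on_C1 unfolding C1_coord y1_def y2_def .
  moreover have "u \<in> line x y1" "v \<in> line x y2"
    unfolding u_def v_def x_def y1_def y2_def using X1'(2) X2'(2) by (simp_all add: coord_mem_line)
  ultimately have "p' + u * v * cnj p' = u + v"
    using second_points_on_chord_through_p'[OF unit \<open>u \<noteq> v\<close>] distinct' unfolding q'_def by blast
  then have "collinear {p', u, v}"
    using unit_chord_collinear_iff[OF unit \<open>u \<noteq> v\<close>] by blast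
  then show ?thesis
    unfolding p'_def u_def v_def collinear_coord_iff .
qed

end

theorem lemma4p4:
  fixes A B C P P' D X Y Z X1 X2 :: complex
    and \<Omega> K \<Gamma> C1 :: "complex set"
  assumes tri: "\<not> collinear {A, B, C}"
    and Om: "is_circle \<Omega>" "A \<in> \<Omega>" "B \<in> \<Omega>" "C \<in> \<Omega>"
    and Ppos: "P \<notin> line A B" "P \<notin> line B C" "P \<notin> line C A" "P \<notin> \<Omega>"
    and iso: "isogonal_conjugate A B C P P'"
    and K: "is_conic K" "{A, B, C, P, P'} \<subseteq> K"
           "\<forall>K'. is_conic K' \<and> {A, B, C, P, P'} \<subseteq> K' \<longrightarrow> K' = K"
    and D: "D \<in> \<Omega>" "D \<in> K" "D \<notin> {A, B, C}"
    and Xd: "X \<in> \<Omega>" "X \<in> line D P" "X \<noteq> D"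
    and Yd: "Y \<in> \<Omega>" "Y \<in> line D P'" "Y \<noteq> D"
    and Gam: "is_circle \<Gamma>" "{P, X, Y} \<subseteq> \<Gamma>"
             "\<forall>\<Gamma>'. is_circle \<Gamma>' \<and> {P, X, Y} \<subseteq> \<Gamma>' \<longrightarrow> \<Gamma>' = \<Gamma>"
    and Zd: "Z \<in> \<Gamma>" "Z \<in> line P P'" "Z \<noteq> P"
    and C1: "is_conic C1" "{A, B, C, P, X} \<subseteq> C1"
            "\<forall>K'. is_conic K' \<and> {A, B, C, P, X} \<subseteq> K' \<longrightarrow> K' = C1"
    and X12: "X1 \<in> C1" "X2 \<in> C1" "X1 \<noteq> X2" "X1 \<notin> {P, X}" "X2 \<notin> {P, X}"
             "concyclic {P, X, X1, X2}"
  shows "parallel_lines (line X1 X2) (line P Z) \<and>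
    (\<forall>X1' X2'. X1' \<in> \<Omega> \<and> X1' \<in> line X X1 \<and> X1' \<noteq> X \<and>
               X2' \<in> \<Omega> \<and> X2' \<in> line X X2 \<and> X2' \<noteq> X \<longrightarrow> collinear {P', X1', X2'})"
proof -
  obtain c0 and R :: real where "R > 0" and \<Omega>_eq: "\<Omega> = {z. cmod (z - c0) = R}"
    using Om(1) unfolding is_circle_def by blast
  obtain \<alpha> \<beta> \<gamma> \<delta> where "\<alpha> \<noteq> 0 \<or> \<beta> \<noteq> 0" and C1_eq: "C1 = {z. conic_poly \<alpha> \<beta> \<gamma> \<delta> z = 0}"
    using C1(1) unfolding is_conic_iff_conic_poly by blast
  have "P' \<noteq> P"
    using Zd(2,3) unfolding mem_line_iff by auto
  have "X \<notin> {A, B, C}"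
    using unique_conic_fifth_point_not_vertex[OF tri Ppos(1-3) C1(3)] .
  have on_circumcircle: "cmod (A - c0) = R" "cmod (B - c0) = R" "cmod (C - c0) = R"
      "cmod (D - c0) = R" "cmod (X - c0) = R" "cmod (P - c0) \<noteq> R"
    using Om(2-4) D(1) Xd(1) Ppos(4) unfolding \<Omega>_eq by auto
  have D_on_circumconics: "D \<in> K'" if "is_conic K'" "{A, B, C, P, P'} \<subseteq> K'" for K'
    using K(3) D(2) that by blast
  have on_C1: "conic_poly \<alpha> \<beta> \<gamma> \<delta> A = 0" "conic_poly \<alpha> \<beta> \<gamma> \<delta> B = 0" "conic_poly \<alpha> \<beta> \<gamma> \<delta> C = 0"
      "conic_poly \<alpha> \<beta> \<gamma> \<delta> P = 0" "conic_poly \<alpha> \<beta> \<gamma> \<delta> X = 0"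
    using C1(2) unfolding C1_eq by auto
  interpret isogonal_conic_config A B C P P' D X c0 R \<alpha> \<beta> \<gamma> \<delta>
    by unfold_locales (simp_all only: \<open>R > 0\<close> on_circumcircle tri Ppos(1-3) iso \<open>P' \<noteq> P\<close>
        D_on_circumconics D(3) Xd(2,3) \<open>X \<notin> {A, B, C}\<close> \<open>\<alpha> \<noteq> 0 \<or> \<beta> \<noteq> 0\<close> on_C1 not_False_eq_True)
  show ?thesis
    using parallel_to_PP'[OF _ _ X12(6) X12(3-5) Zd(2,3)]
      second_intersections_collinear_with_P'[OF _ _ X12(6) X12(3-5)] X12(1,2)
    unfolding \<Omega>_eq C1_eq by auto
qed

end
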